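(* Let $n,m\in\mathbb N$, $d:=\min\{n,m\}$, fix an integer $k\in\{1,\dots,d-1\}$ and $\theta\in(0,1)$, and set $\alpha:=k+\theta$. Then $\mathsf P_\alpha$ is not stable under completely positive post-composition: there exist a Hermitian-preserving map $\Phi:\mathbb M_n\to\mathbb M_m$ with $\Phi\in\mathsf P_\alpha$ and a completely positive map $\Gamma:\mathbb M_m\to\mathbb M_m$ such that $\Gamma\circ\Phi\notin\mathsf P_\alpha$. More precisely, if $\Phi\in\mathsf P_\alpha\setminus\mathsf P_{k+1}$, then there exists $A\in\mathbb M_m$ such that $\mathrm{Ad}_A\circ\Phi\notin\mathsf P_\alpha$, where $\mathrm{Ad}_A(Y)=AYA^\ast$.
   Context: The Choi matrix of a linear $\Phi:\mathbb M_n\to\mathbb M_m$ is $C_\Phi=\sum_{i,j=1}^nE_{ij}\otimes\Phi(E_{ij})$, with $E_{ij}$ the matrix units of $\mathbb M_n$. For $\psi=\sum_{i,j}a_{ij}e_i\otimes f_j\in\mathbb C^n\otimes\mathbb C^m$ (standard bases), its Schmidt coefficients $s_1(\psi)\ge\dots\ge s_d(\psi)\ge0$ are the singular values of $[a_{ij}]$. For $\beta\in[1,d]$ with $k'=\lfloor\beta\rfloor$, $\theta'=\beta-k'$, $r'=\lceil\beta\rceil$, a unit vector $\psi$ is $\beta$-admissible if $s_j(\psi)=0$ for $j\ge r'+1$ and, when $\theta'>0$, $s_{k'+1}(\psi)\le\frac{\theta'}{k'}\sum_{j=1}^{k'}s_j(\psi)$; $\mathcal V_\beta$ is the set of these. A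 Hermitian-preserving map $\Phi$ belongs to $\mathsf P_\beta$ ($\beta$-positive) if $\langle\psi,C_\Phi\psi\rangle\ge0$ for all $\psi\in\mathcal V_\beta$. (For integer $\beta$ this is $\beta$-positivity in the usual sense.) *)

theory Defs
  imports "Jordan_Normal_Form.Char_Poly" "Jordan_Normal_Form.Conjugate"
begin

text \<open>The tensor product C^n (x) C^m is
  identified with C^(n*m) via e_i (x) f_p  |->  basis vector number i*m+p
  (Kronecker ordering, 0-based indices).\<close>

definition cadj :: "complex mat \<Rightarrow> complex mat" where
  "cadj A = mat (dim_col A) (dim_row A) (\<lambda>(i,j). cnj (A $$ (j,i)))"

definition munit :: "nat \<Rightarrow> nat \<Rightarrow> nat \<Rightarrow> complex mat" where
  "munit n i j = mat n n (\<lambda>(p,q). if p = i \<and> q = j then 1 else 0)"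

definition qform :: "complex mat \<Rightarrow> complex vec \<Rightarrow> complex" where
  "qform X v = (\<Sum>i<dim_vec v. \<Sum>j<dim_vec v. cnj (v $ i) * X $$ (i,j) * v $ j)"

definition psd :: "nat \<Rightarrow> complex mat \<Rightarrow> bool" where
  "psd N X \<longleftrightarrow> X \<in> carrier_mat N N \<and> (\<forall>v \<in> carrier_vec N. qform X v \<ge> 0)"

definition lin_map :: "nat \<Rightarrow> nat \<Rightarrow> (complex mat \<Rightarrow> complex mat) \<Rightarrow> bool" where
  "lin_map n m \<Phi> \<longleftrightarrow>
     (\<forall>X \<in> carrier_mat n n. \<Phi> X \<in> carrier_mat m m) \<and>
     (\<forall>X \<in> carrier_mat n n. \<forall>Y \<in> carrier_mat n n. \<Phi> (X + Y) = \<Phi> X + \<Phi> Y) \<and>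
     (\<forall>X \<in> carrier_mat n n. \<forall>c::complex. \<Phi> (c \<cdot>\<^sub>m X) = c \<cdot>\<^sub>m \<Phi> X)"

definition herm_pres :: "nat \<Rightarrow> nat \<Rightarrow> (complex mat \<Rightarrow> complex mat) \<Rightarrow> bool" where
  "herm_pres n m \<Phi> \<longleftrightarrow> lin_map n m \<Phi> \<and>
     (\<forall>X \<in> carrier_mat n n. cadj X = X \<longrightarrow> cadj (\<Phi> X) = \<Phi> X)"

text \<open>Choi matrix  C_Phi = sum_ij E_ij (x) Phi(E_ij)  (Kronecker ordering).\<close>
definition choi :: "nat \<Rightarrow> nat \<Rightarrow> (complex mat \<Rightarrow> complex mat) \<Rightarrow> complex mat" where
  "choi n m \<Phi> = mat (n*m) (n*m)
     (\<lambda>(a,b). \<Phi> (munit n (a div m) (b div m)) $$ (a mod m, b mod m))"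

text \<open>Coefficient matrix [a_ij] of psi = sum a_ij e_i (x) f_j.\<close>
definition coeff_mat :: "nat \<Rightarrow> nat \<Rightarrow> complex vec \<Rightarrow> complex mat" where
  "coeff_mat n m \<psi> = mat n m (\<lambda>(i,j). \<psi> $ (i*m + j))"

text \<open>Eigenvalues (with multiplicity, in decreasing order) of a matrix whose
  characteristic polynomial splits over the reals (e.g. a Hermitian matrix).\<close>
definition eigs_desc :: "complex mat \<Rightarrow> real list" where
  "eigs_desc M = (THE ls. length ls = dim_row M \<and> sorted_wrt (\<ge>) ls \<and>
      char_poly M = prod_list (map (\<lambda>a. [:- complex_of_real a, 1:]) ls))"

text \<open>Schmidt coefficients s_1(psi) >= ... >= s_d(psi), d = min n m (1-based index j):
  the singular values of [a_ij], i.e. square roots of the eigenvalues of A A^*.\<close>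
definition schmidt :: "nat \<Rightarrow> nat \<Rightarrow> complex vec \<Rightarrow> nat \<Rightarrow> real" where
  "schmidt n m \<psi> j =
     (let A = coeff_mat n m \<psi> in
      if 1 \<le> j \<and> j \<le> min n m then sqrt (eigs_desc (A * cadj A) ! (j - 1)) else 0)"

definition admissible :: "nat \<Rightarrow> nat \<Rightarrow> real \<Rightarrow> complex vec \<Rightarrow> bool" where
  "admissible n m \<beta> \<psi> \<longleftrightarrow>
     (let k' = nat \<lfloor>\<beta>\<rfloor>; \<theta>' = \<beta> - real k'; r' = nat \<lceil>\<beta>\<rceil>; d = min n m in
      \<psi> \<in> carrier_vec (n*m) \<and>
      (\<Sum>i<n*m. (cmod (\<psi> $ i))\<^sup>2) = 1 \<and>
      (\<forall>j. r' + 1 \<le> j \<and> j \<le> d \<longrightarrow> schmidt n m \<psi> j = 0) \<and>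
      (\<theta>' > 0 \<longrightarrow> schmidt n m \<psi> (k' + 1) \<le> \<theta>' / real k' * (\<Sum>j=1..k'. schmidt n m \<psi> j)))"

definition beta_pos :: "nat \<Rightarrow> nat \<Rightarrow> real \<Rightarrow> (complex mat \<Rightarrow> complex mat) \<Rightarrow> bool" where
  "beta_pos n m \<beta> \<Phi> \<longleftrightarrow> herm_pres n m \<Phi> \<and>
     (\<forall>\<psi>. admissible n m \<beta> \<psi> \<longrightarrow> qform (choi n m \<Phi>) \<psi> \<ge> 0)"

definition mblock :: "nat \<Rightarrow> complex mat \<Rightarrow> nat \<Rightarrow> nat \<Rightarrow> complex mat" where
  "mblock m X i j = mat m m (\<lambda>(p,q). X $$ (i*m + p, j*m + q))"

text \<open>Completely positive maps M_m -> M_m: id_k (x) Gamma is positive for every k.\<close>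
definition compl_pos :: "nat \<Rightarrow> (complex mat \<Rightarrow> complex mat) \<Rightarrow> bool" where
  "compl_pos m \<Gamma> \<longleftrightarrow> lin_map m m \<Gamma> \<and>
     (\<forall>k X. psd (k*m) X \<longrightarrow>
        psd (k*m) (mat (k*m) (k*m)
           (\<lambda>(a,b). \<Gamma> (mblock m X (a div m) (b div m)) $$ (a mod m, b mod m))))"

definition Ad :: "complex mat \<Rightarrow> complex mat \<Rightarrow> complex mat" where
  "Ad A Y = A * Y * cadj A"

end

theory Submission
  imports Defs "Jordan_Normal_Form.Schur_Decomposition" "HOL-Combinatorics.List_Permutation"
    "HOL-Analysis.L2_Norm"
begin

(* Second claim: if psi witnesses that Phi is not (k+1)-positive, its coefficient matrix is U N
   with U unitary and only the first k+1 rows of N nonzero (Schmidt decomposition).  Factor N = D B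
   with D diagonal carrying the boundary Schmidt profile (1,...,1,theta)/sqrt(k+theta^2); then
   psi = (1 (x) B^T) psi' for an alpha-admissible psi', and psi' witnesses that Ad_A o Phi is not
   alpha-positive for A = conj B.
   First claim: take Phi X = tr X * 1 - c P X P with c = (k+theta^2)/(k+theta)^2 and P the
   projection onto the first k+1 coordinates.  Its Choi form at psi is |psi|^2 - c |<Omega,psi>|^2
   with Omega = sum_{i<=k} e_i (x) f_i, and |<Omega,psi>| <= s_1 + ... + s_{k+1}; for alpha-admissible
   unit psi the square of this sum is at most (k+theta)^2/(k+theta^2), so Phi is alpha-positive,
   while the normalised Omega shows that Phi is not (k+1)-positive.  The second claim then
   applies to Phi, and Ad_A is completely positive. *)

lemma sum_lessThan_mult_nat:
  fixes f :: "nat \<Rightarrow> 'a::comm_monoid_add"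
  shows "(\<Sum>a<n * m. f a) = (\<Sum>i<n. \<Sum>q<m. f (i * m + q))"
proof -
  have "(\<Sum>q<m. f (i * m + q)) = (\<Sum>a\<in>{i * m..<i * m + m}. f a)" for i
    using sum.shift_bounds_nat_ivl[of f 0 "i * m" m] by (simp add: atLeast0LessThan add.commute)
  then show ?thesis using sum.nat_group[of f m n] by simp
qed

lemma mult_add_less_mult:
  fixes i p n m :: nat
  assumes "i < n" "p < m"
  shows "i * m + p < n * m"
proof -
  have "i * m + p < Suc i * m" using assms(2) by simp
  also have "\<dots> \<le> n * m" using assms(1) by (intro mult_right_mono) auto
  finally show ?thesis .
qed

lemma less_mult_nat_cases:
  fixes a K m :: nat
  assumes "a < K * m"
  obtains i p where "i < K" "p < m" "a = i * m + p"
proof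
  show "a div m < K" using assms by (simp add: less_mult_imp_div_less)
  show "a mod m < m" using assms by (cases "m = 0") auto
qed simp

lemma div_mod_mult_add [simp]:
  fixes i p m :: nat
  assumes "p < m"
  shows "(i * m + p) div m = i" "(i * m + p) mod m = p"
  using assms by auto

lemma sum_single_nonzero:
  assumes "finite A" "a \<in> A" "\<And>x. x \<in> A \<Longrightarrow> x \<noteq> a \<Longrightarrow> f x = 0"
  shows "sum f A = f a"
  using sum.mono_neutral_right[of A "{a}" f] assms by auto

lemma sum_sum_delta:
  assumes "finite A" "finite B" "i \<in> A" "p \<in> B"
  shows "(\<Sum>j\<in>A. \<Sum>q\<in>B. if j = i \<and> q = p then f j q else 0) = f i p"
proof -
  have "(\<Sum>j\<in>A. \<Sum>q\<in>B. if j = i \<and> q = p then f j q else 0) = (\<Sum>q\<in>B. if q = p then f i q else 0)"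
    using assms by (subst sum_single_nonzero[of _ i]) auto
  also have "\<dots> = f i p" using assms by simp
  finally show ?thesis .
qed

lemma sum_diag_indicator:
  fixes g :: "nat \<Rightarrow> nat \<Rightarrow> 'a::comm_monoid_add"
  assumes "r \<le> n" "r \<le> m"
  shows "(\<Sum>i<n. \<Sum>p<m. if i = p \<and> p < r then g i p else 0) = (\<Sum>i<r. g i i)"
proof -
  have "(\<Sum>p<m. if i = p \<and> p < r then g i p else 0) = (if i < r then g i i else 0)" for i
  proof (cases "i < r")
    case True
    then show ?thesis using assms by (subst sum_single_nonzero[of _ i]) auto
  qed (auto intro: sum.neutral)
  then have "(\<Sum>i<n. \<Sum>p<m. if i = p \<and> p < r then g i p else 0) = (\<Sum>i<n. if i < r then g i i else 0)"
    by simp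
  also have "\<dots> = (\<Sum>i<r. g i i)"
  proof -
    have "{i \<in> {..<n}. i < r} = {..<r}" using assms by auto
    then show ?thesis using sum.inter_filter[of "{..<n}" "\<lambda>i. g i i" "\<lambda>i. i < r"] by simp
  qed
  finally show ?thesis .
qed

lemma sum_swap_inner:
  "(\<Sum>a\<in>A. \<Sum>b\<in>B. \<Sum>c\<in>C. \<Sum>d\<in>D. f a b c d) = (\<Sum>c\<in>C. \<Sum>d\<in>D. \<Sum>a\<in>A. \<Sum>b\<in>B. f a b c d)"
proof -
  have "(\<Sum>a\<in>A. \<Sum>b\<in>B. \<Sum>c\<in>C. \<Sum>d\<in>D. f a b c d) = (\<Sum>a\<in>A. \<Sum>c\<in>C. \<Sum>d\<in>D. \<Sum>b\<in>B. f a b c d)"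
    by (intro sum.cong refl) (simp add: sum.swap[of _ B] sum.swap[of _ B D])
  also have "\<dots> = (\<Sum>c\<in>C. \<Sum>d\<in>D. \<Sum>a\<in>A. \<Sum>b\<in>B. f a b c d)"
    by (simp add: sum.swap[of _ A] sum.swap[of _ A D])
  finally show ?thesis .
qed

lemma sum_sum_mult_sum_sum:
  fixes f g :: "'i \<Rightarrow> 'j \<Rightarrow> 'a::comm_semiring_0"
  shows "(\<Sum>i\<in>A. \<Sum>p\<in>B. f i p) * (\<Sum>j\<in>C. \<Sum>q\<in>D. g j q) = (\<Sum>i\<in>A. \<Sum>p\<in>B. \<Sum>j\<in>C. \<Sum>q\<in>D. f i p * g j q)"
proof -
  have "(\<Sum>i\<in>A. \<Sum>p\<in>B. f i p) * (\<Sum>j\<in>C. \<Sum>q\<in>D. g j q) = (\<Sum>i\<in>A. \<Sum>p\<in>B. f i p * (\<Sum>j\<in>C. \<Sum>q\<in>D. g j q))"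
    by (simp add: sum_distrib_right)
  also have "\<dots> = (\<Sum>i\<in>A. \<Sum>p\<in>B. \<Sum>j\<in>C. \<Sum>q\<in>D. f i p * g j q)"
    by (simp add: sum_distrib_left)
  finally show ?thesis .
qed

section \<open>Conjugate transpose and unitary matrices\<close>

lemma row_scalar_prod_col:
  assumes "A \<in> carrier_mat a b" "B \<in> carrier_mat b c" "i < a" "j < c"
  shows "row A i \<bullet> col B j = (\<Sum>l<b. A $$ (i,l) * B $$ (l,j))"
  using assms by (auto simp: scalar_prod_def atLeast0LessThan intro!: sum.cong)

lemma index_mult_mat_sum:
  assumes "A \<in> carrier_mat a b" "B \<in> carrier_mat b c" "i < a" "j < c"
  shows "(A * B) $$ (i,j) = (\<Sum>l<b. A $$ (i,l) * B $$ (l,j))"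
  using assms by (simp add: row_scalar_prod_col)

lemma index_mult_mat_vec_sum:
  assumes "A \<in> carrier_mat a b" "v \<in> carrier_vec b" "i < a"
  shows "(A *\<^sub>v v) $ i = (\<Sum>l<b. A $$ (i,l) * v $ l)"
  using assms by (auto simp: scalar_prod_def atLeast0LessThan intro!: sum.cong)

lemma mult_carrier_mat_square [simp]:
  "A \<in> carrier_mat n n \<Longrightarrow> B \<in> carrier_mat n n \<Longrightarrow> A * B \<in> carrier_mat n n"
  by (rule mult_carrier_mat)

lemma dim_cadj [simp]: "dim_row (cadj A) = dim_col A" "dim_col (cadj A) = dim_row A"
  by (auto simp: cadj_def)

lemma cadj_carrier_mat [simp]: "A \<in> carrier_mat a b \<Longrightarrow> cadj A \<in> carrier_mat b a"
  by (auto simp: cadj_def)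

lemma index_cadj [simp]: "i < dim_col A \<Longrightarrow> j < dim_row A \<Longrightarrow> cadj A $$ (i,j) = cnj (A $$ (j,i))"
  by (auto simp: cadj_def)

lemma cadj_cadj [simp]: "cadj (cadj A) = A"
  by (rule eq_matI) (auto simp: cadj_def)

lemma cadj_mult:
  assumes "A \<in> carrier_mat a b" "B \<in> carrier_mat b c"
  shows "cadj (A * B) = cadj B * cadj A"
proof (rule eq_matI)
  fix i j assume "i < dim_row (cadj B * cadj A)" "j < dim_col (cadj B * cadj A)"
  then have ij: "i < c" "j < a" using assms by auto
  have "cadj (A * B) $$ (i,j) = (\<Sum>l<b. cnj (A $$ (j,l)) * cnj (B $$ (l,i)))"
    using assms ij by (simp add: index_mult_mat_sum[OF assms ij(2) ij(1)] cnj_sum)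
  also have "\<dots> = (cadj B * cadj A) $$ (i,j)"
    using assms ij by (subst index_mult_mat_sum[of _ c b _ a]) (auto simp: mult.commute)
  finally show "cadj (A * B) $$ (i,j) = (cadj B * cadj A) $$ (i,j)" .
qed (use assms in auto)

lemma index_mult_mat_cadj:
  assumes "B \<in> carrier_mat a b" "X \<in> carrier_mat b b" "i < a" "j < a"
  shows "(B * X * cadj B) $$ (i,j) = (\<Sum>k<b. \<Sum>l<b. B $$ (i,k) * X $$ (k,l) * cnj (B $$ (j,l)))"
proof -
  have BX: "B * X \<in> carrier_mat a b" using assms by simp
  have "(B * X * cadj B) $$ (i,j) = (\<Sum>l<b. (B * X) $$ (i,l) * cnj (B $$ (j,l)))"
    using assms by (simp add: index_mult_mat_sum[OF BX cadj_carrier_mat[OF assms(1)]] del: index_mult_mat)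
  also have "\<dots> = (\<Sum>l<b. (\<Sum>k<b. B $$ (i,k) * X $$ (k,l)) * cnj (B $$ (j,l)))"
    using assms by (intro sum.cong refl) (simp add: index_mult_mat_sum[OF assms(1,2)] del: index_mult_mat)
  finally
  also have "\<dots> = (\<Sum>l<b. \<Sum>k<b. B $$ (i,k) * X $$ (k,l) * cnj (B $$ (j,l)))"
    by (simp add: sum_distrib_right)
  finally show ?thesis by (rule trans[OF _ sum.swap])
qed

lemma mult_cnj_eq_cmod_sq: "z * cnj z = complex_of_real ((cmod z)\<^sup>2)" "cnj z * z = complex_of_real ((cmod z)\<^sup>2)"
  using complex_norm_square[of z] by (simp_all add: mult.commute)

lemma diag_mult_cadj:
  assumes N: "N \<in> carrier_mat n m" and l: "l < n"
  shows "(N * cadj N) $$ (l,l) = of_real (\<Sum>q<m. (cmod (N $$ (l,q)))\<^sup>2)"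
proof -
  have "(N * cadj N) $$ (l,l) = (\<Sum>q<m. N $$ (l,q) * cadj N $$ (q,l))"
    by (rule index_mult_mat_sum[OF N cadj_carrier_mat[OF N] l l])
  then show ?thesis using N l by (simp add: mult_cnj_eq_cmod_sq)
qed

lemma diag_cadj_mult:
  assumes N: "N \<in> carrier_mat n m" and q: "q < m"
  shows "(cadj N * N) $$ (q,q) = of_real (\<Sum>l<n. (cmod (N $$ (l,q)))\<^sup>2)"
proof -
  have "(cadj N * N) $$ (q,q) = (\<Sum>l<n. cadj N $$ (q,l) * N $$ (l,q))"
    by (rule index_mult_mat_sum[OF cadj_carrier_mat[OF N] N q q])
  then show ?thesis using N q by (simp add: mult_cnj_eq_cmod_sq)
qed

definition unitary :: "nat \<Rightarrow> complex mat \<Rightarrow> bool" where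
  "unitary n U \<longleftrightarrow> U \<in> carrier_mat n n \<and> cadj U * U = 1\<^sub>m n \<and> U * cadj U = 1\<^sub>m n"

lemma unitary_carrier_mat: "unitary n U \<Longrightarrow> U \<in> carrier_mat n n"
  by (simp add: unitary_def)

lemma unitary_col_orthonormal:
  assumes "unitary n U" "a < n" "b < n"
  shows "(\<Sum>l<n. cnj (U $$ (l,a)) * U $$ (l,b)) = (if a = b then 1 else 0)"
proof -
  have U: "U \<in> carrier_mat n n" and e: "cadj U * U = 1\<^sub>m n" using assms unfolding unitary_def by auto
  have "(cadj U * U) $$ (a,b) = (\<Sum>l<n. cnj (U $$ (l,a)) * U $$ (l,b))"
    using U assms by (subst index_mult_mat_sum[of _ n n _ n]) auto
  then show ?thesis using e assms by auto
qed

lemma unitaryI_col_orthonormal: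
  assumes U: "U \<in> carrier_mat n n"
    and orth: "\<And>a b. a < n \<Longrightarrow> b < n \<Longrightarrow> (\<Sum>l<n. cnj (U $$ (l,a)) * U $$ (l,b)) = (if a = b then 1 else 0)"
  shows "unitary n U"
proof -
  have UU: "cadj U * U = 1\<^sub>m n"
  proof (rule eq_matI)
    fix a b assume "a < dim_row (1\<^sub>m n)" "b < dim_col (1\<^sub>m n)"
    then show "(cadj U * U) $$ (a,b) = 1\<^sub>m n $$ (a,b)"
      using U orth by (subst index_mult_mat_sum[of _ n n _ n]) auto
  qed (use U in auto)
  then have "U * cadj U = 1\<^sub>m n" using mat_mult_left_right_inverse[OF cadj_carrier_mat[OF U] U] by blast
  then show ?thesis unfolding unitary_def using U UU by blast
qed

lemma cadj_one [simp]: "cadj (1\<^sub>m n) = 1\<^sub>m n"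
  by (rule eq_matI) auto

lemma unitary_one [simp]: "unitary n (1\<^sub>m n)"
  by (simp add: unitary_def)

lemma unitary_cadj: "unitary n U \<Longrightarrow> unitary n (cadj U)"
  by (auto simp: unitary_def)

lemma unitary_mult:
  assumes "unitary n U" "unitary n V"
  shows "unitary n (U * V)"
proof -
  have U: "U \<in> carrier_mat n n" "cadj U * U = 1\<^sub>m n"
    and V: "V \<in> carrier_mat n n" "cadj V * V = 1\<^sub>m n"
    using assms unfolding unitary_def by auto
  have "cadj (U * V) * (U * V) = cadj V * ((cadj U * U) * V)"
    using U(1) V(1) by (simp add: cadj_mult[OF U(1) V(1)] assoc_mult_mat[of _ n n _ n _ n])
  also have "\<dots> = cadj V * V" using U V by simp
  also have "\<dots> = 1\<^sub>m n" using V by simp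
  finally have "cadj (U * V) * (U * V) = 1\<^sub>m n" .
  moreover have UV: "U * V \<in> carrier_mat n n" using U V by simp
  ultimately have "(U * V) * cadj (U * V) = 1\<^sub>m n"
    using mat_mult_left_right_inverse[OF cadj_carrier_mat[OF UV] UV] by blast
  with \<open>cadj (U * V) * (U * V) = 1\<^sub>m n\<close> UV show ?thesis unfolding unitary_def by blast
qed

lemma unitary_cadj_mult_cancel:
  assumes "unitary n U" "X \<in> carrier_mat n k"
  shows "cadj U * (U * X) = X" "U * (cadj U * X) = X"
proof -
  have U: "U \<in> carrier_mat n n" "cadj U * U = 1\<^sub>m n" "U * cadj U = 1\<^sub>m n"
    using assms(1) by (auto simp: unitary_def)
  show "cadj U * (U * X) = X"
    unfolding assoc_mult_mat[OF cadj_carrier_mat[OF U(1)] U(1) assms(2), symmetric] U(2)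
    by (rule left_mult_one_mat[OF assms(2)])
  show "U * (cadj U * X) = X"
    unfolding assoc_mult_mat[OF U(1) cadj_carrier_mat[OF U(1)] assms(2), symmetric] U(3)
    by (rule left_mult_one_mat[OF assms(2)])
qed

lemma unitary_conj_cancel:
  assumes uU: "unitary n U" and X: "X \<in> carrier_mat n n"
  shows "cadj U * (U * X * cadj U) * U = X"
proof -
  have U: "U \<in> carrier_mat n n" using uU by (rule unitary_carrier_mat)
  have "cadj U * (U * X * cadj U) * U = (cadj U * U) * X * (cadj U * U)"
    using U X by (simp add: assoc_mult_mat[of _ n n _ n _ n])
  then show ?thesis using uU X by (simp add: unitary_def)
qed

lemma unitary_permute_cols:
  assumes U: "unitary n U" and \<sigma>: "bij_betw \<sigma> {..<n} {..<n}"
  shows "unitary n (mat n n (\<lambda>(i,j). U $$ (i, \<sigma> j)))"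
proof (rule unitaryI_col_orthonormal)
  fix a b assume ab: "a < n" "b < n"
  have \<sigma>ab: "\<sigma> a < n" "\<sigma> b < n" using \<sigma> ab by (auto dest: bij_betw_apply)
  have "(\<sigma> a = \<sigma> b) = (a = b)" using bij_betw_imp_inj_on[OF \<sigma>] ab by (auto dest: inj_onD)
  then show "(\<Sum>l<n. cnj (mat n n (\<lambda>(i,j). U $$ (i, \<sigma> j)) $$ (l,a)) * mat n n (\<lambda>(i,j). U $$ (i, \<sigma> j)) $$ (l,b))
      = (if a = b then 1 else 0)"
    using unitary_col_orthonormal[OF U \<sigma>ab] ab by simp
qed simp

lemma unitary_col_norm:
  assumes "unitary n U" "l < n"
  shows "(\<Sum>i<n. (cmod (U $$ (i,l)))\<^sup>2) = 1"
proof -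
  have "(\<Sum>i<n. cnj (U $$ (i,l)) * U $$ (i,l)) = 1" using unitary_col_orthonormal[OF assms assms(2)] by simp
  then have "complex_of_real (\<Sum>i<n. (cmod (U $$ (i,l)))\<^sup>2) = 1"
    by (simp only: mult_cnj_eq_cmod_sq of_real_sum)
  then show ?thesis by (simp only: of_real_eq_1_iff)
qed

lemma sum_cmod_sq_unitary_mult:
  assumes U: "unitary n U" and M: "M \<in> carrier_mat n m"
  shows "(\<Sum>i<n. \<Sum>q<m. (cmod ((U * M) $$ (i,q)))\<^sup>2) = (\<Sum>i<n. \<Sum>q<m. (cmod (M $$ (i,q)))\<^sup>2)"
proof -
  have U': "U \<in> carrier_mat n n" using U by (rule unitary_carrier_mat)
  have UM: "U * M \<in> carrier_mat n m" using U' M by simp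
  have "cadj (U * M) * (U * M) = cadj M * (cadj U * (U * M))"
    unfolding cadj_mult[OF U' M] by (rule assoc_mult_mat[OF cadj_carrier_mat[OF M] cadj_carrier_mat[OF U'] UM])
  also have "\<dots> = cadj M * M" by (simp add: unitary_cadj_mult_cancel[OF U M])
  finally have MM: "cadj (U * M) * (U * M) = cadj M * M" .
  have "(\<Sum>i<n. (cmod ((U * M) $$ (i,q)))\<^sup>2) = (\<Sum>i<n. (cmod (M $$ (i,q)))\<^sup>2)" if "q < m" for q
  proof -
    have "complex_of_real (\<Sum>i<n. (cmod ((U * M) $$ (i,q)))\<^sup>2) = of_real (\<Sum>i<n. (cmod (M $$ (i,q)))\<^sup>2)"
      using MM diag_cadj_mult[OF UM that] diag_cadj_mult[OF M that] by metis
    then show ?thesis by (simp only: of_real_eq_iff)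
  qed
  then have "(\<Sum>q<m. \<Sum>i<n. (cmod ((U * M) $$ (i,q)))\<^sup>2) = (\<Sum>q<m. \<Sum>i<n. (cmod (M $$ (i,q)))\<^sup>2)"
    by simp
  then show ?thesis by (simp only: sum.swap[of _ "{..<n}" "{..<m}"])
qed

definition real_diag_mat :: "nat \<Rightarrow> (nat \<Rightarrow> real) \<Rightarrow> complex mat" where
  "real_diag_mat n t = mat n n (\<lambda>(i,j). if i = j then complex_of_real (t i) else 0)"

lemma real_diag_mat_carrier [simp]: "real_diag_mat n t \<in> carrier_mat n n"
  by (simp add: real_diag_mat_def)

lemma diag_mat_real_diag_mat: "diag_mat (real_diag_mat n t) = map (\<lambda>i. complex_of_real (t i)) [0..<n]"
  by (auto simp: diag_mat_def real_diag_mat_def intro!: nth_equalityI)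

lemma index_unitary_conj_real_diag:
  assumes U: "U \<in> carrier_mat n n" and ij: "i < n" "j < n"
  shows "(U * real_diag_mat n t * cadj U) $$ (i,j) = (\<Sum>l<n. U $$ (i,l) * of_real (t l) * cnj (U $$ (j,l)))"
proof -
  have "(U * real_diag_mat n t * cadj U) $$ (i,j)
      = (\<Sum>k<n. \<Sum>l<n. U $$ (i,k) * (if k = l then of_real (t k) else 0) * cnj (U $$ (j,l)))"
    using index_mult_mat_cadj[OF U real_diag_mat_carrier ij] by (simp add: real_diag_mat_def)
  also have "\<dots> = (\<Sum>l<n. U $$ (i,l) * of_real (t l) * cnj (U $$ (j,l)))"
    by (intro sum.cong refl) (simp add: if_distrib if_distribR sum.delta cong: if_cong)
  finally show ?thesis .
qed

section \<open>Spectral theorem for Hermitian matrices\<close>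

lemma unitary_normalise_cols:
  assumes orth: "corthogonal ws" and wsc: "set ws \<subseteq> carrier_vec N" and lenw: "length ws = N"
  defines "r j \<equiv> complex_of_real (sqrt (\<Sum>l<N. (cmod (ws ! j $ l))\<^sup>2))"
  shows "unitary N (mat N N (\<lambda>(i,j). ws ! j $ i / r j))" and "\<And>j. j < N \<Longrightarrow> r j \<noteq> 0"
proof -
  have wsj: "ws ! j \<in> carrier_vec N" if "j < N" for j using wsc lenw that by auto
  have cs: "ws ! a \<bullet>c ws ! b = (\<Sum>l<N. ws ! a $ l * cnj (ws ! b $ l))" if "a < N" "b < N" for a b
    using wsj[OF that(1)] wsj[OF that(2)] by (auto simp: scalar_prod_def atLeast0LessThan intro!: sum.cong)
  define s where "s j = (\<Sum>l<N. (cmod (ws ! j $ l))\<^sup>2)" for j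
  have ss: "ws ! j \<bullet>c ws ! j = complex_of_real (s j)" if "j < N" for j
    unfolding cs[OF that that] s_def by (simp add: mult_cnj_eq_cmod_sq)
  have spos: "s j > 0" if "j < N" for j
  proof -
    have "ws ! j \<bullet>c ws ! j \<noteq> 0" using corthogonalD[OF orth, of j j] that lenw by auto
    then have "s j \<noteq> 0" using ss[OF that] by auto
    moreover have "s j \<ge> 0" unfolding s_def by (simp add: sum_nonneg)
    ultimately show ?thesis by simp
  qed
  have rr: "cnj (r a) * r a = complex_of_real (s a)" if "a < N" for a
    using spos[OF that] by (simp add: r_def s_def[symmetric] flip: of_real_mult)
  show "unitary N (mat N N (\<lambda>(i,j). ws ! j $ i / r j))"
  proof (rule unitaryI_col_orthonormal)
    fix a b assume ab: "a < N" "b < N"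
    have "(\<Sum>l<N. cnj (mat N N (\<lambda>(i,j). ws ! j $ i / r j) $$ (l,a)) * mat N N (\<lambda>(i,j). ws ! j $ i / r j) $$ (l,b))
        = (ws ! b \<bullet>c ws ! a) / (cnj (r a) * r b)"
      using ab by (auto simp: cs sum_divide_distrib intro!: sum.cong)
    also have "\<dots> = (if a = b then 1 else 0)"
      using corthogonalD[OF orth, of b a] ab lenw ss[OF ab(1)] rr[OF ab(1)] spos[OF ab(1)] by auto
    finally show "(\<Sum>l<N. cnj (mat N N (\<lambda>(i,j). ws ! j $ i / r j) $$ (l,a)) * mat N N (\<lambda>(i,j). ws ! j $ i / r j) $$ (l,b))
        = (if a = b then 1 else 0)" .
  qed simp
  show "r j \<noteq> 0" if "j < N" for j using spos[OF that] by (simp add: r_def s_def)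
qed

lemma unitary_first_col_parallel:
  assumes v: "v \<in> carrier_vec N" and v0: "v \<noteq> 0\<^sub>v N"
  shows "\<exists>W c. unitary N W \<and> c \<noteq> 0 \<and> (\<forall>i<N. W $$ (i,0) = c * v $ i)"
proof -
  interpret cof_vec_space N "TYPE(complex)" .
  define b where "b = basis_completion v"
  from basis_completion[OF v v0, folded b_def]
  have dist_b: "distinct b" and indep: "\<not> lin_dep (set b)" and bc: "set b \<subseteq> carrier_vec N"
    and hdb: "hd b = v" and len_b: "length b = N" by auto
  have N0: "N \<noteq> 0" using v v0 by auto
  from hdb len_b N0 obtain vs where bv: "b = v # vs" by (cases b) auto
  define ws where "ws = gram_schmidt N b"
  from gram_schmidt_result[OF bc dist_b indep ws_def]
  have orth: "corthogonal ws" and wsc: "set ws \<subseteq> carrier_vec N" and lenw: "length ws = N"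
    by (auto simp: len_b)
  have "hd ws = v" unfolding ws_def bv using gram_schmidt_hd[OF v] by simp
  then have ws0: "ws ! 0 = v" using lenw N0 by (cases ws) auto
  define r where "r j = complex_of_real (sqrt (\<Sum>l<N. (cmod (ws ! j $ l))\<^sup>2))" for j
  have "unitary N (mat N N (\<lambda>(i,j). ws ! j $ i / r j))" "r 0 \<noteq> 0"
    using unitary_normalise_cols[OF orth wsc lenw] N0 unfolding r_def by auto
  moreover have "\<forall>i<N. mat N N (\<lambda>(i,j). ws ! j $ i / r j) $$ (i,0) = (1 / r 0) * v $ i"
    using N0 ws0 by auto
  ultimately show ?thesis
    by (intro exI[of _ "mat N N (\<lambda>(i,j). ws ! j $ i / r j)"] exI[of _ "1 / r 0"]) simp
qed

definition diag_block :: "complex \<Rightarrow> complex mat \<Rightarrow> complex mat" where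
  "diag_block a B = mat (Suc (dim_row B)) (Suc (dim_col B))
     (\<lambda>(i,j). if i = 0 \<and> j = 0 then a else if i = 0 \<or> j = 0 then 0 else B $$ (i - 1, j - 1))"

lemma dim_diag_block [simp]:
  "dim_row (diag_block a B) = Suc (dim_row B)" "dim_col (diag_block a B) = Suc (dim_col B)"
  by (simp_all add: diag_block_def)

lemma diag_block_carrier_mat [simp]: "B \<in> carrier_mat n n \<Longrightarrow> diag_block a B \<in> carrier_mat (Suc n) (Suc n)"
  by (simp add: diag_block_def)

lemma index_diag_block [simp]:
  "diag_block a B $$ (0,0) = a"
  "j < dim_col B \<Longrightarrow> diag_block a B $$ (0, Suc j) = 0"
  "i < dim_row B \<Longrightarrow> diag_block a B $$ (Suc i, 0) = 0"
  "i < dim_row B \<Longrightarrow> j < dim_col B \<Longrightarrow> diag_block a B $$ (Suc i, Suc j) = B $$ (i,j)"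
  by (simp_all add: diag_block_def)

lemma diag_block_mult:
  assumes A: "A \<in> carrier_mat n n" and B: "B \<in> carrier_mat n n"
  shows "diag_block a A * diag_block b B = diag_block (a * b) (A * B)"
proof (rule eq_matI)
  fix i j assume "i < dim_row (diag_block (a * b) (A * B))" "j < dim_col (diag_block (a * b) (A * B))"
  then have ij: "i < Suc n" "j < Suc n" using A B by auto
  have "(diag_block a A * diag_block b B) $$ (i,j)
      = (\<Sum>l<Suc n. diag_block a A $$ (i,l) * diag_block b B $$ (l,j))"
    using A B ij by (intro index_mult_mat_sum) auto
  also have "\<dots> = diag_block a A $$ (i,0) * diag_block b B $$ (0,j)
        + (\<Sum>l<n. diag_block a A $$ (i,Suc l) * diag_block b B $$ (Suc l,j))"
    by (rule sum.lessThan_Suc_shift)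
  also have "\<dots> = diag_block (a * b) (A * B) $$ (i,j)"
  proof (cases i; cases j)
    fix i' j' assume "i = Suc i'" "j = Suc j'"
    moreover have "diag_block (a * b) (A * B) $$ (Suc i', Suc j') = (\<Sum>l<n. A $$ (i',l) * B $$ (l,j'))"
      using A B ij \<open>i = Suc i'\<close> \<open>j = Suc j'\<close> by (simp add: row_scalar_prod_col[OF A B])
    ultimately show ?thesis using A B ij by simp
  qed (use A B ij in auto)
  finally show "(diag_block a A * diag_block b B) $$ (i,j) = diag_block (a * b) (A * B) $$ (i,j)" .
qed (use A B in auto)

lemma cadj_diag_block: "cadj (diag_block a B) = diag_block (cnj a) (cadj B)"
  by (rule eq_matI) (auto simp: diag_block_def)

lemma diag_block_one: "diag_block 1 (1\<^sub>m n) = 1\<^sub>m (Suc n)"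
  by (rule eq_matI) (auto simp: diag_block_def)

lemma diag_block_real_diag_mat:
  "diag_block (of_real e) (real_diag_mat n t) = real_diag_mat (Suc n) (\<lambda>l. if l = 0 then e else t (l - 1))"
  by (rule eq_matI) (auto simp: diag_block_def real_diag_mat_def)

lemma unitary_diag_block_one:
  assumes U: "unitary n U"
  shows "unitary (Suc n) (diag_block 1 U)"
proof -
  have "U \<in> carrier_mat n n" "cadj U * U = 1\<^sub>m n" "U * cadj U = 1\<^sub>m n" using U by (auto simp: unitary_def)
  then show ?thesis
    by (auto simp: unitary_def cadj_diag_block diag_block_mult[of _ n] diag_block_one)
qed

lemma hermitian_unitary_conj:
  assumes H: "H \<in> carrier_mat n n" and W: "W \<in> carrier_mat n n" and h: "cadj H = H"
  shows "cadj (cadj W * H * W) = cadj W * H * W"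
  using H W h by (simp add: cadj_mult[of _ n n _ n] assoc_mult_mat[of _ n n _ n _ n])

lemma hermitian_first_col_diag_block:
  assumes H: "H \<in> carrier_mat (Suc n) (Suc n)" and h: "cadj H = H"
    and col: "\<And>i. i < Suc n \<Longrightarrow> H $$ (i,0) = (if i = 0 then e else 0)"
  shows "\<exists>H'. H' \<in> carrier_mat n n \<and> cadj H' = H' \<and> H = diag_block (of_real (Re e)) H'"
proof -
  have herm: "cnj (H $$ (j,i)) = H $$ (i,j)" if "i < Suc n" "j < Suc n" for i j
    using arg_cong[OF h, of "\<lambda>X. X $$ (i,j)"] H that by simp
  have "cnj e = e" using herm[of 0 0] col[of 0] by simp
  then have e: "of_real (Re e) = e" by (metis Reals_cnj_iff complex_is_Real_iff of_real_Re)
  have row: "H $$ (0,j) = (if j = 0 then e else 0)" if "j < Suc n" for j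
    using herm[of 0 j] col[of j] \<open>cnj e = e\<close> that by auto
  define H' where "H' = mat n n (\<lambda>(i,j). H $$ (Suc i, Suc j))"
  have H': "H' \<in> carrier_mat n n" by (simp add: H'_def)
  have "cadj H' = H'" by (rule eq_matI) (auto simp: H'_def herm)
  moreover have "H = diag_block (of_real (Re e)) H'"
  proof (rule eq_matI)
    fix i j assume "i < dim_row (diag_block (of_real (Re e)) H')" "j < dim_col (diag_block (of_real (Re e)) H')"
    then have ij: "i < Suc n" "j < Suc n" using H' by auto
    show "H $$ (i,j) = diag_block (of_real (Re e)) H' $$ (i,j)"
    proof (cases i; cases j)
      assume "i = 0" "j = 0"
      then show ?thesis using row[of 0] e by simp
    next
      fix j' assume "i = 0" "j = Suc j'"
      then show ?thesis using row[of j] ij H' by simp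
    next
      fix i' assume "i = Suc i'" "j = 0"
      then show ?thesis using col[of i] ij H' by simp
    next
      fix i' j' assume "i = Suc i'" "j = Suc j'"
      then show ?thesis using ij H' by (simp add: H'_def)
    qed
  qed (use H H' in auto)
  ultimately show ?thesis using H' by blast
qed

lemma unitary_conj_eigenvector_first_col:
  assumes H: "H \<in> carrier_mat N N" and uW: "unitary N W" and v: "v \<in> carrier_vec N"
    and Hv: "H *\<^sub>v v = e \<cdot>\<^sub>v v" and W0: "\<forall>i<N. W $$ (i,0) = c * v $ i" and i: "i < N"
  shows "(cadj W * H * W) $$ (i,0) = (if i = 0 then e else 0)"
proof -
  have W: "W \<in> carrier_mat N N" using uW by (rule unitary_carrier_mat)
  have HW0: "(H * W) $$ (l,0) = e * W $$ (l,0)" if l: "l < N" for l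
  proof -
    have "(H * W) $$ (l,0) = (\<Sum>p<N. H $$ (l,p) * W $$ (p,0))"
      using H W l i by (intro index_mult_mat_sum) auto
    also have "\<dots> = c * (\<Sum>p<N. H $$ (l,p) * v $ p)"
      unfolding sum_distrib_left using W0 by (intro sum.cong) auto
    also have "(\<Sum>p<N. H $$ (l,p) * v $ p) = (H *\<^sub>v v) $ l"
      using H v l by (auto simp: scalar_prod_def atLeast0LessThan intro!: sum.cong)
    finally show ?thesis using Hv v l W0 by simp
  qed
  have "(cadj W * H * W) $$ (i,0) = (cadj W * (H * W)) $$ (i,0)"
    using H W by (simp add: assoc_mult_mat[of _ N N _ N _ N])
  also have "\<dots> = (\<Sum>l<N. cadj W $$ (i,l) * (H * W) $$ (l,0))"
    using H W i by (intro index_mult_mat_sum) auto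
  also have "\<dots> = e * (\<Sum>l<N. cnj (W $$ (l,i)) * W $$ (l,0))"
    unfolding sum_distrib_left using W i HW0 by (intro sum.cong) auto
  also have "\<dots> = (if i = 0 then e else 0)" using unitary_col_orthonormal[OF uW i, of 0] i by simp
  finally show ?thesis .
qed

lemma hermitian_deflation:
  assumes H: "H \<in> carrier_mat (Suc n) (Suc n)" and h: "cadj H = H"
  shows "\<exists>W e H'. unitary (Suc n) W \<and> H' \<in> carrier_mat n n \<and> cadj H' = H' \<and>
           cadj W * H * W = diag_block (of_real e) H'"
proof -
  obtain es where "char_poly H = (\<Prod>a\<leftarrow>es. [:- a, 1:])" "length es = Suc n"
    using char_poly_factorized[OF H] by blast
  then obtain e es' where "char_poly H = [:- e, 1:] * (\<Prod>a\<leftarrow>es'. [:- a, 1:])"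
    by (cases es) auto
  then have "eigenvalue H e" using eigenvalue_root_char_poly[OF H] by simp
  then obtain v where "eigenvector H v e" using find_eigenvector[OF H] by blast
  then have v: "v \<in> carrier_vec (Suc n)" and v0: "v \<noteq> 0\<^sub>v (Suc n)" and Hv: "H *\<^sub>v v = e \<cdot>\<^sub>v v"
    unfolding eigenvector_def using H by auto
  obtain W c where uW: "unitary (Suc n) W" and W0: "\<forall>i<Suc n. W $$ (i,0) = c * v $ i"
    using unitary_first_col_parallel[OF v v0] by blast
  have W: "W \<in> carrier_mat (Suc n) (Suc n)" using uW by (rule unitary_carrier_mat)
  have col: "(cadj W * H * W) $$ (i,0) = (if i = 0 then e else 0)" if "i < Suc n" for i
    using unitary_conj_eigenvector_first_col[OF H uW v Hv W0 that] .
  obtain H' where "H' \<in> carrier_mat n n" "cadj H' = H'" "cadj W * H * W = diag_block (of_real (Re e)) H'"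
    using hermitian_first_col_diag_block[of "cadj W * H * W" n e, OF _ hermitian_unitary_conj[OF H W h] col] H W
    by auto
  then show ?thesis using uW by blast
qed

theorem hermitian_unitary_diagonalization:
  assumes "H \<in> carrier_mat n n" "cadj H = H"
  shows "\<exists>U t. unitary n U \<and> H = U * real_diag_mat n t * cadj U"
  using assms
proof (induction n arbitrary: H)
  case 0
  then have "H = 1\<^sub>m 0 * real_diag_mat 0 t * cadj (1\<^sub>m 0)" for t by (auto intro!: eq_matI)
  then show ?case using unitary_one by blast
next
  case (Suc n)
  obtain W e H' where uW: "unitary (Suc n) W" and H': "H' \<in> carrier_mat n n" "cadj H' = H'"
    and WHW: "cadj W * H * W = diag_block (of_real e) H'"
    using hermitian_deflation[OF Suc.prems] by blast
  obtain U t where uU: "unitary n U" and H'eq: "H' = U * real_diag_mat n t * cadj U"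
    using Suc.IH[OF H'] by blast
  have W: "W \<in> carrier_mat (Suc n) (Suc n)" "W * cadj W = 1\<^sub>m (Suc n)" using uW by (auto simp: unitary_def)
  have U: "U \<in> carrier_mat n n" using uU by (rule unitary_carrier_mat)
  define V where "V = W * diag_block 1 U"
  define t' where "t' l = (if l = 0 then e else t (l - 1))" for l
  have "real_diag_mat (Suc n) t' = diag_block (of_real e) (real_diag_mat n t)"
    unfolding t'_def by (rule diag_block_real_diag_mat[symmetric])
  then have "diag_block (of_real e) H' = diag_block 1 U * real_diag_mat (Suc n) t' * cadj (diag_block 1 U)"
    using U by (simp add: H'eq cadj_diag_block diag_block_mult[of _ n])
  moreover have "W * (cadj W * H * W) * cadj W = (W * cadj W) * H * (W * cadj W)"
    using W(1) Suc.prems(1) by (simp add: assoc_mult_mat[of _ "Suc n" "Suc n" _ "Suc n" _ "Suc n"])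
  then have "H = W * (cadj W * H * W) * cadj W" using W(2) Suc.prems(1) by simp
  ultimately have "H = V * real_diag_mat (Suc n) t' * cadj V"
    using W U unfolding WHW V_def
    by (simp add: cadj_mult[of _ "Suc n" "Suc n" _ "Suc n"] assoc_mult_mat[of _ "Suc n" "Suc n" _ "Suc n" _ "Suc n"])
  moreover have "unitary (Suc n) V" unfolding V_def by (rule unitary_mult[OF uW unitary_diag_block_one[OF uU]])
  ultimately show ?case by metis
qed

abbreviation lin_factor :: "real \<Rightarrow> complex poly" where
  "lin_factor a \<equiv> [:- complex_of_real a, 1:]"

lemma order_prod_lin_factor:
  "Polynomial.order (complex_of_real x) (prod_list (map lin_factor xs)) = count (mset xs) x"
proof (induct xs)
  case (Cons a xs)
  have eq: "prod_list (map lin_factor (a # xs)) = lin_factor a * prod_list (map lin_factor xs)"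
    by (simp only: list.map prod_list.Cons)
  have "prod_list (map lin_factor (a # xs)) \<noteq> 0" unfolding prod_list_zero_iff by auto
  then have "Polynomial.order (complex_of_real x) (prod_list (map lin_factor (a # xs)))
      = Polynomial.order (complex_of_real x) (lin_factor a) + Polynomial.order (complex_of_real x) (prod_list (map lin_factor xs))"
    unfolding eq by (rule order_mult)
  moreover have "Polynomial.order (complex_of_real x) (lin_factor a) = (if x = a then 1 else 0)"
    using order_power_n_n[of "complex_of_real a" 1] by (auto intro: order_0I)
  ultimately show ?case using Cons by simp
qed (simp add: order_0I)

lemma sorted_desc_mset_unique:
  fixes xs ys :: "real list"
  assumes "sorted_wrt (\<ge>) xs" "sorted_wrt (\<ge>) ys" "mset xs = mset ys"
  shows "xs = ys"
proof -
  have s: "sorted (rev xs)" "sorted (rev ys)" and m: "mset (rev ys) = mset (rev xs)"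
    using assms by (simp_all add: sorted_wrt_rev)
  from m s(2) have "sort (rev xs) = rev ys" by (rule properties_for_sort)
  then show ?thesis using sorted_sort_id[OF s(1)] by simp
qed

lemma eigs_desc_eqI:
  assumes "length ls = dim_row M" "sorted_wrt (\<ge>) ls" "char_poly M = prod_list (map lin_factor ls)"
  shows "eigs_desc M = ls"
  unfolding eigs_desc_def
proof (rule the_equality)
  fix ls' assume ls': "length ls' = dim_row M \<and> sorted_wrt (\<ge>) ls' \<and> char_poly M = prod_list (map lin_factor ls')"
  have "count (mset ls') x = count (mset ls) x" for x
    using order_prod_lin_factor[of x ls'] order_prod_lin_factor[of x ls] ls' assms(3) by simp
  then have "mset ls' = mset ls" by (simp add: multiset_eq_iff)
  then show "ls' = ls" using sorted_desc_mset_unique assms(2) ls' by blast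
qed (use assms in auto)

lemma char_poly_real_diag_mat: "char_poly (real_diag_mat n t) = prod_list (map lin_factor (map t [0..<n]))"
proof -
  have "upper_triangular (real_diag_mat n t)" by (auto simp: upper_triangular_def real_diag_mat_def)
  then show ?thesis
    using char_poly_upper_triangular[OF real_diag_mat_carrier] diag_mat_real_diag_mat by (simp add: o_def)
qed

lemma char_poly_unitary_conj:
  assumes "unitary n U" "X \<in> carrier_mat n n"
  shows "char_poly (U * X * cadj U) = char_poly X"
proof -
  have "similar_mat_wit (U * X * cadj U) X U (cadj U)"
    using assms unfolding similar_mat_wit_def unitary_def Let_def by auto
  then show ?thesis using char_poly_similar unfolding similar_mat_def by blast
qed

lemma eigs_desc_unitary_conj_real_diag:
  assumes "unitary n U" "sorted_wrt (\<ge>) (map t [0..<n])"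
  shows "eigs_desc (U * real_diag_mat n t * cadj U) = map t [0..<n]"
  using assms unitary_carrier_mat[OF assms(1)]
  by (intro eigs_desc_eqI) (auto simp: char_poly_unitary_conj char_poly_real_diag_mat)

theorem hermitian_unitary_diagonalization_sorted:
  assumes H: "H \<in> carrier_mat n n" and h: "cadj H = H"
  shows "\<exists>U. unitary n U \<and> H = U * real_diag_mat n (\<lambda>l. eigs_desc H ! l) * cadj U \<and>
     length (eigs_desc H) = n \<and> sorted_wrt (\<ge>) (eigs_desc H)"
proof -
  obtain U0 t where uU0: "unitary n U0" and Heq: "H = U0 * real_diag_mat n t * cadj U0"
    using hermitian_unitary_diagonalization[OF H h] by blast
  have U0: "U0 \<in> carrier_mat n n" using uU0 by (rule unitary_carrier_mat)
  define ds where "ds = map t [0..<n]"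
  define L where "L = rev (sort ds)"
  have sL: "sorted_wrt (\<ge>) L" and mL: "mset L = mset ds" and lL: "length L = n"
    by (simp_all add: L_def ds_def sorted_wrt_rev)
  have "prod_list (map lin_factor ds) = prod_list (map lin_factor L)"
    by (simp add: mL flip: prod_mset_prod_list)
  then have "char_poly H = prod_list (map lin_factor L)"
    unfolding Heq char_poly_unitary_conj[OF uU0 real_diag_mat_carrier] char_poly_real_diag_mat ds_def .
  then have eL: "eigs_desc H = L" using H lL sL by (intro eigs_desc_eqI) auto
  obtain \<sigma> where bij: "bij_betw \<sigma> {..<n} {..<n}" and Lds: "\<forall>i<n. L ! i = ds ! (\<sigma> i)"
    using permutation_Ex_bij[OF mL] lL by (auto simp: ds_def)
  have Ls: "L ! i = t (\<sigma> i)" if "i < n" for i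
    using Lds bij_betw_apply[OF bij] that by (auto simp: ds_def)
  define U where "U = mat n n (\<lambda>(i,j). U0 $$ (i, \<sigma> j))"
  have uU: "unitary n U" unfolding U_def by (rule unitary_permute_cols[OF uU0 bij])
  have "H = U * real_diag_mat n (\<lambda>l. L ! l) * cadj U"
  proof (rule eq_matI)
    fix i j assume "i < dim_row (U * real_diag_mat n (\<lambda>l. L ! l) * cadj U)"
      "j < dim_col (U * real_diag_mat n (\<lambda>l. L ! l) * cadj U)"
    then have ij: "i < n" "j < n" by (auto simp: U_def)
    have "(U * real_diag_mat n (\<lambda>l. L ! l) * cadj U) $$ (i,j)
        = (\<Sum>l<n. U $$ (i,l) * of_real (L ! l) * cnj (U $$ (j,l)))"
      by (rule index_unitary_conj_real_diag[OF unitary_carrier_mat[OF uU] ij])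
    also have "\<dots> = (\<Sum>l<n. U0 $$ (i,\<sigma> l) * of_real (t (\<sigma> l)) * cnj (U0 $$ (j,\<sigma> l)))"
      using ij Ls by (auto simp: U_def intro!: sum.cong)
    also have "\<dots> = (\<Sum>l<n. U0 $$ (i,l) * of_real (t l) * cnj (U0 $$ (j,l)))"
      using sum.reindex_bij_betw[OF bij, of "\<lambda>l. U0 $$ (i,l) * of_real (t l) * cnj (U0 $$ (j,l))"] by simp
    also have "\<dots> = H $$ (i,j)" unfolding Heq using index_unitary_conj_real_diag[OF U0 ij] by simp
    finally show "H $$ (i,j) = (U * real_diag_mat n (\<lambda>l. L ! l) * cadj U) $$ (i,j)" by simp
  qed (use H in \<open>auto simp: U_def\<close>)
  then show ?thesis using uU lL sL eL by auto
qed

section \<open>Coefficient matrices and Schmidt coefficients\<close>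

definition coeff_vec :: "nat \<Rightarrow> nat \<Rightarrow> complex mat \<Rightarrow> complex vec" where
  "coeff_vec n m M = vec (n * m) (\<lambda>a. M $$ (a div m, a mod m))"

lemma coeff_vec_carrier [simp]: "coeff_vec n m M \<in> carrier_vec (n * m)"
  by (simp add: coeff_vec_def)

lemma dim_coeff_vec [simp]: "dim_vec (coeff_vec n m M) = n * m"
  by (simp add: coeff_vec_def)

lemma coeff_mat_carrier [simp]: "coeff_mat n m \<psi> \<in> carrier_mat n m"
  by (simp add: coeff_mat_def)

lemma index_coeff_vec [simp]: "i < n \<Longrightarrow> p < m \<Longrightarrow> coeff_vec n m M $ (i * m + p) = M $$ (i,p)"
  by (simp add: coeff_vec_def mult_add_less_mult)

lemma coeff_mat_coeff_vec [simp]: "M \<in> carrier_mat n m \<Longrightarrow> coeff_mat n m (coeff_vec n m M) = M"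
  by (rule eq_matI) (auto simp: coeff_mat_def)

lemma coeff_vec_coeff_mat [simp]: "\<psi> \<in> carrier_vec (n * m) \<Longrightarrow> coeff_vec n m (coeff_mat n m \<psi>) = \<psi>"
proof (rule eq_vecI)
  fix a assume "\<psi> \<in> carrier_vec (n * m)" "a < dim_vec \<psi>"
  then obtain i p where "i < n" "p < m" "a = i * m + p" by (auto elim: less_mult_nat_cases)
  then show "coeff_vec n m (coeff_mat n m \<psi>) $ a = \<psi> $ a" by (simp add: coeff_mat_def)
qed (simp add: coeff_vec_def)

lemma sum_cmod_sq_coeff_mat:
  "(\<Sum>a<n * m. (cmod (\<psi> $ a))\<^sup>2) = (\<Sum>i<n. \<Sum>q<m. (cmod (coeff_mat n m \<psi> $$ (i,q)))\<^sup>2)"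
  by (simp add: sum_lessThan_mult_nat coeff_mat_def)

lemma real_diag_gram_has_zero:
  assumes N: "N \<in> carrier_mat n m" and NN: "N * cadj N = real_diag_mat n t" and mn: "m < n"
  shows "\<exists>i\<le>m. t i = 0"
proof -
  define R where "R = mat (Suc m) (Suc m) (\<lambda>(i,j). if j < m then N $$ (i,j) else 0)"
  have R: "R \<in> carrier_mat (Suc m) (Suc m)" by (simp add: R_def)
  have "R * cadj R = real_diag_mat (Suc m) t"
  proof (rule eq_matI)
    fix i j assume ij: "i < dim_row (real_diag_mat (Suc m) t)" "j < dim_col (real_diag_mat (Suc m) t)"
    then have ijn: "i < n" "j < n" using mn by (auto simp: real_diag_mat_def)
    have "(R * cadj R) $$ (i,j) = (\<Sum>q<Suc m. R $$ (i,q) * cadj R $$ (q,j))"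
      using ij by (intro index_mult_mat_sum[OF R cadj_carrier_mat[OF R]]) (auto simp: real_diag_mat_def)
    also have "\<dots> = (\<Sum>q<m. N $$ (i,q) * cadj N $$ (q,j))"
      using ij N ijn by (simp add: R_def real_diag_mat_def)
    also have "\<dots> = (N * cadj N) $$ (i,j)"
      by (rule index_mult_mat_sum[OF N cadj_carrier_mat[OF N] ijn, symmetric])
    finally show "(R * cadj R) $$ (i,j) = real_diag_mat (Suc m) t $$ (i,j)"
      using NN ij ijn by (simp add: real_diag_mat_def)
  qed (simp_all add: R_def real_diag_mat_def)
  moreover have "det (cadj R) = 0"
  proof -
    have "multrow m 0 (cadj R) = cadj R"
      by (rule eq_matI) (auto simp: mat_multrow_gen_def R_def)
    then show ?thesis using det_multrow[of m "Suc m" "cadj R" 0] R by simp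
  qed
  ultimately have "det (real_diag_mat (Suc m) t) = 0" using det_mult[OF R cadj_carrier_mat[OF R]] by simp
  moreover have "det (real_diag_mat (Suc m) t) = prod_list (map (\<lambda>i. complex_of_real (t i)) [0..<Suc m])"
    using det_upper_triangular[OF _ real_diag_mat_carrier, of "Suc m" t] diag_mat_real_diag_mat
    by (simp add: upper_triangular_def real_diag_mat_def del: upt_Suc)
  ultimately have "0 \<in> set (map (\<lambda>i. complex_of_real (t i)) [0..<Suc m])"
    by (simp only: prod_list_zero_iff)
  then show ?thesis by (auto simp: less_Suc_eq_le simp del: upt_Suc)
qed

lemma gram_cadj_mult:
  assumes U: "U \<in> carrier_mat n n" and M: "M \<in> carrier_mat n m"
  shows "(cadj U * M) * cadj (cadj U * M) = cadj U * (M * cadj M) * U"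
  unfolding cadj_mult[OF cadj_carrier_mat[OF U] M] cadj_cadj
  using assoc_mult_mat[OF cadj_carrier_mat[OF U] M mult_carrier_mat[OF cadj_carrier_mat[OF M] U]]
    assoc_mult_mat[OF M cadj_carrier_mat[OF M] U]
    assoc_mult_mat[OF cadj_carrier_mat[OF U] mult_carrier_mat[OF M cadj_carrier_mat[OF M]] U]
  by (simp only:)

lemma gram_eigs_desc_row_norms:
  assumes M: "M \<in> carrier_mat n m"
  defines "L \<equiv> eigs_desc (M * cadj M)"
  shows "\<exists>U. unitary n U \<and> (\<forall>l<n. (\<Sum>q<m. (cmod ((cadj U * M) $$ (l,q)))\<^sup>2) = L ! l) \<and>
    (\<forall>l. m \<le> l \<and> l < n \<longrightarrow> L ! l = 0)"
proof -
  have "cadj (M * cadj M) = M * cadj M" by (simp add: cadj_mult[OF M cadj_carrier_mat[OF M]])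
  then obtain U where uU: "unitary n U" and MM: "M * cadj M = U * real_diag_mat n (\<lambda>l. L ! l) * cadj U"
      and sL: "sorted_wrt (\<ge>) L" and lL: "length L = n"
    using hermitian_unitary_diagonalization_sorted[of "M * cadj M" n] M unfolding L_def by auto
  have U: "U \<in> carrier_mat n n" using uU by (rule unitary_carrier_mat)
  define N where "N = cadj U * M"
  have N: "N \<in> carrier_mat n m" unfolding N_def by (rule mult_carrier_mat[OF cadj_carrier_mat[OF U] M])
  have "N * cadj N = cadj U * (M * cadj M) * U" unfolding N_def by (rule gram_cadj_mult[OF U M])
  also have "\<dots> = real_diag_mat n (\<lambda>l. L ! l)"
    unfolding MM by (rule unitary_conj_cancel[OF uU real_diag_mat_carrier])
  finally have NN: "N * cadj N = real_diag_mat n (\<lambda>l. L ! l)" .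
  have rows: "(\<Sum>q<m. (cmod (N $$ (l,q)))\<^sup>2) = L ! l" if "l < n" for l
  proof -
    have "complex_of_real (\<Sum>q<m. (cmod (N $$ (l,q)))\<^sup>2) = of_real (L ! l)"
      using diag_mult_cadj[OF N that] NN that by (simp add: real_diag_mat_def)
    then show ?thesis by (simp only: of_real_eq_iff)
  qed
  have L_nonneg: "L ! l \<ge> 0" if "l < n" for l
    unfolding rows[OF that, symmetric] by (simp add: sum_nonneg)
  have "L ! l = 0" if "m \<le> l" "l < n" for l
  proof -
    have "m < n" using that by simp
    then obtain i where i: "i \<le> m" "L ! i = 0" using real_diag_gram_has_zero[OF N NN] by blast
    have "L ! l \<le> L ! i"
    proof (cases "i = l")
      case False
      then have "i < l" using i(1) that(1) by simp
      then show ?thesis using sL lL that(2) by (simp add: sorted_wrt_iff_nth_less)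
    qed simp
    then show ?thesis using L_nonneg[OF that(2)] i by simp
  qed
  then show ?thesis using uU rows unfolding N_def by blast
qed

lemma schmidt_decomposition:
  "\<exists>U. unitary n U \<and>
     (\<forall>l<n. (\<Sum>q<m. (cmod ((cadj U * coeff_mat n m \<psi>) $$ (l,q)))\<^sup>2) = (schmidt n m \<psi> (Suc l))\<^sup>2)"
proof -
  define L where "L = eigs_desc (coeff_mat n m \<psi> * cadj (coeff_mat n m \<psi>))"
  obtain U where uU: "unitary n U"
    and rows: "\<forall>l<n. (\<Sum>q<m. (cmod ((cadj U * coeff_mat n m \<psi>) $$ (l,q)))\<^sup>2) = L ! l"
    and zero: "\<forall>l. m \<le> l \<and> l < n \<longrightarrow> L ! l = 0"
    using gram_eigs_desc_row_norms[OF coeff_mat_carrier] unfolding L_def by blast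
  have "L ! l \<ge> 0" if "l < n" for l using rows that by (metis sum_nonneg zero_le_power2)
  then have "(schmidt n m \<psi> (Suc l))\<^sup>2 = L ! l" if "l < n" for l
    using zero that by (auto simp: schmidt_def Let_def L_def)
  then show ?thesis using uU rows by auto
qed

lemma schmidt_nonneg: "schmidt n m \<psi> j \<ge> 0"
proof -
  obtain U where uU: "unitary n U" and rows: "\<forall>l<n. (\<Sum>q<m. (cmod ((cadj U * coeff_mat n m \<psi>) $$ (l,q)))\<^sup>2)
      = eigs_desc (coeff_mat n m \<psi> * cadj (coeff_mat n m \<psi>)) ! l"
    using gram_eigs_desc_row_norms[OF coeff_mat_carrier] by blast
  then show ?thesis by (auto simp: schmidt_def Let_def sum_nonneg simp flip: rows)
qed

lemma sum_cmod_sq_eq_sum_schmidt_sq: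
  "(\<Sum>a<n * m. (cmod (\<psi> $ a))\<^sup>2) = (\<Sum>l<n. (schmidt n m \<psi> (Suc l))\<^sup>2)"
proof -
  obtain U where uU: "unitary n U"
    and rows: "\<forall>l<n. (\<Sum>q<m. (cmod ((cadj U * coeff_mat n m \<psi>) $$ (l,q)))\<^sup>2) = (schmidt n m \<psi> (Suc l))\<^sup>2"
    using schmidt_decomposition by blast
  have "(\<Sum>a<n * m. (cmod (\<psi> $ a))\<^sup>2) = (\<Sum>i<n. \<Sum>q<m. (cmod (coeff_mat n m \<psi> $$ (i,q)))\<^sup>2)"
    by (rule sum_cmod_sq_coeff_mat)
  also have "\<dots> = (\<Sum>i<n. \<Sum>q<m. (cmod ((cadj U * coeff_mat n m \<psi>) $$ (i,q)))\<^sup>2)"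
    by (rule sum_cmod_sq_unitary_mult[OF unitary_cadj[OF uU] coeff_mat_carrier, symmetric])
  also have "\<dots> = (\<Sum>l<n. (schmidt n m \<psi> (Suc l))\<^sup>2)" using rows by simp
  finally show ?thesis .
qed

lemma unitary_col_cmod_sum_le:
  assumes uU: "unitary n U" and l: "l < n" and r: "r \<le> n" "r \<le> m"
  shows "cmod (\<Sum>i<r. U $$ (i,l) * N $$ (l,i)) \<le> sqrt (\<Sum>q<m. (cmod (N $$ (l,q)))\<^sup>2)"
proof -
  have "cmod (\<Sum>i<r. U $$ (i,l) * N $$ (l,i)) \<le> (\<Sum>i<r. \<bar>cmod (U $$ (i,l))\<bar> * \<bar>cmod (N $$ (l,i))\<bar>)"
    by (rule order_trans[OF norm_sum]) (simp add: norm_mult)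
  also have "\<dots> \<le> L2_set (\<lambda>i. cmod (U $$ (i,l))) {..<r} * L2_set (\<lambda>i. cmod (N $$ (l,i))) {..<r}"
    by (rule L2_set_mult_ineq)
  also have "\<dots> \<le> 1 * sqrt (\<Sum>q<m. (cmod (N $$ (l,q)))\<^sup>2)"
  proof (rule mult_mono)
    have "(\<Sum>i<r. (cmod (U $$ (i,l)))\<^sup>2) \<le> (\<Sum>i<n. (cmod (U $$ (i,l)))\<^sup>2)"
      using r by (intro sum_mono2) auto
    then show "L2_set (\<lambda>i. cmod (U $$ (i,l))) {..<r} \<le> 1"
      using unitary_col_norm[OF uU l] by (simp add: L2_set_def)
    have "(\<Sum>i<r. (cmod (N $$ (l,i)))\<^sup>2) \<le> (\<Sum>q<m. (cmod (N $$ (l,q)))\<^sup>2)"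
      using r by (intro sum_mono2) auto
    then show "L2_set (\<lambda>i. cmod (N $$ (l,i))) {..<r} \<le> sqrt (\<Sum>q<m. (cmod (N $$ (l,q)))\<^sup>2)"
      by (simp add: L2_set_def)
  qed simp_all
  finally show ?thesis by simp
qed

lemma cmod_diag_sum_le_sum_schmidt:
  assumes r: "r \<le> n" "r \<le> m"
  shows "cmod (\<Sum>i<r. \<psi> $ (i * m + i)) \<le> (\<Sum>l<n. schmidt n m \<psi> (Suc l))"
proof -
  obtain U where uU: "unitary n U"
    and rows: "\<forall>l<n. (\<Sum>q<m. (cmod ((cadj U * coeff_mat n m \<psi>) $$ (l,q)))\<^sup>2) = (schmidt n m \<psi> (Suc l))\<^sup>2"
    using schmidt_decomposition by blast
  have U: "U \<in> carrier_mat n n" using uU by (rule unitary_carrier_mat)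
  define N where "N = cadj U * coeff_mat n m \<psi>"
  have N: "N \<in> carrier_mat n m" unfolding N_def by (rule mult_carrier_mat[OF cadj_carrier_mat[OF U] coeff_mat_carrier])
  have MUN: "coeff_mat n m \<psi> = U * N"
    unfolding N_def by (rule unitary_cadj_mult_cancel(2)[OF uU coeff_mat_carrier, symmetric])
  have "(\<Sum>i<r. \<psi> $ (i * m + i)) = (\<Sum>i<r. (U * N) $$ (i,i))"
    using r by (simp flip: MUN add: coeff_mat_def)
  also have "\<dots> = (\<Sum>i<r. \<Sum>l<n. U $$ (i,l) * N $$ (l,i))"
    using r by (intro sum.cong refl index_mult_mat_sum[OF U N]) auto
  also have "\<dots> = (\<Sum>l<n. \<Sum>i<r. U $$ (i,l) * N $$ (l,i))"
    by (rule sum.swap)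
  finally have "cmod (\<Sum>i<r. \<psi> $ (i * m + i)) \<le> (\<Sum>l<n. cmod (\<Sum>i<r. U $$ (i,l) * N $$ (l,i)))"
    by (simp add: norm_sum)
  also have "\<dots> \<le> (\<Sum>l<n. schmidt n m \<psi> (Suc l))"
  proof (rule sum_mono)
    fix l assume l: "l \<in> {..<n}"
    then have "sqrt (\<Sum>q<m. (cmod (N $$ (l,q)))\<^sup>2) = schmidt n m \<psi> (Suc l)"
      using rows schmidt_nonneg[of n m \<psi> "Suc l"] by (simp add: N_def)
    then show "cmod (\<Sum>i<r. U $$ (i,l) * N $$ (l,i)) \<le> schmidt n m \<psi> (Suc l)"
      using unitary_col_cmod_sum_le[OF uU _ r, of l N] l by simp
  qed
  finally show ?thesis .
qed

definition rect_diag :: "nat \<Rightarrow> nat \<Rightarrow> (nat \<Rightarrow> real) \<Rightarrow> complex mat" where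
  "rect_diag n m d = mat n m (\<lambda>(i,j). if i = j then complex_of_real (d i) else 0)"

lemma rect_diag_carrier [simp]: "rect_diag n m d \<in> carrier_mat n m"
  by (simp add: rect_diag_def)

lemma dim_rect_diag [simp]: "dim_row (rect_diag n m d) = n" "dim_col (rect_diag n m d) = m"
  by (simp_all add: rect_diag_def)

lemma schmidt_unitary_mult_rect_diag:
  assumes uU: "unitary n U" and d_nonneg: "\<And>i. 0 \<le> d i" and d_antimono: "\<And>i j. i \<le> j \<Longrightarrow> d j \<le> d i"
    and coeff: "coeff_mat n m \<psi> = U * rect_diag n m d" and j: "1 \<le> j" "j \<le> min n m"
  shows "schmidt n m \<psi> j = d (j - 1)"
proof -
  have U: "U \<in> carrier_mat n n" using uU by (rule unitary_carrier_mat)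
  define D where "D = rect_diag n m d"
  have D: "D \<in> carrier_mat n m" by (simp add: D_def)
  define t where "t l = (if l < m then (d l)\<^sup>2 else 0)" for l
  have DD: "D * cadj D = real_diag_mat n t"
  proof (rule eq_matI)
    fix i k assume "i < dim_row (real_diag_mat n t)" "k < dim_col (real_diag_mat n t)"
    then have ik: "i < n" "k < n" by (simp_all add: real_diag_mat_def)
    have "(D * cadj D) $$ (i,k) = (\<Sum>q<m. D $$ (i,q) * cadj D $$ (q,k))"
      using ik by (intro index_mult_mat_sum[OF D cadj_carrier_mat[OF D]])
    also have "\<dots> = (\<Sum>q<m. if q = i \<and> q = k then of_real ((d i)\<^sup>2) else 0)"
      using ik by (intro sum.cong refl) (auto simp: D_def rect_diag_def power2_eq_square)
    also have "\<dots> = real_diag_mat n t $$ (i,k)"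
      using ik by (cases "i = k") (simp_all add: real_diag_mat_def t_def)
    finally show "(D * cadj D) $$ (i,k) = real_diag_mat n t $$ (i,k)" .
  qed (simp_all add: D_def real_diag_mat_def)
  have "coeff_mat n m \<psi> * cadj (coeff_mat n m \<psi>) = U * (D * cadj D) * cadj U"
    unfolding coeff D_def[symmetric] cadj_mult[OF U D]
    using assoc_mult_mat[OF U D mult_carrier_mat[OF cadj_carrier_mat[OF D] cadj_carrier_mat[OF U]]]
      assoc_mult_mat[OF U mult_carrier_mat[OF D cadj_carrier_mat[OF D]] cadj_carrier_mat[OF U]]
      assoc_mult_mat[OF D cadj_carrier_mat[OF D] cadj_carrier_mat[OF U]]
    by (simp only:)
  moreover have "sorted_wrt (\<ge>) (map t [0..<n])"
    using d_nonneg d_antimono by (auto simp: sorted_wrt_iff_nth_less t_def intro: power_mono)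
  ultimately have "eigs_desc (coeff_mat n m \<psi> * cadj (coeff_mat n m \<psi>)) = map t [0..<n]"
    using eigs_desc_unitary_conj_real_diag[OF uU] DD by simp
  moreover have "j - 1 < n" "j - 1 < m" using j by auto
  ultimately show ?thesis using j d_nonneg[of "j - 1"] by (simp add: schmidt_def Let_def t_def)
qed

lemma sum_cmod_sq_unitary_mult_rect_diag:
  assumes uU: "unitary n U" and coeff: "coeff_mat n m \<psi> = U * rect_diag n m d"
  shows "(\<Sum>a<n * m. (cmod (\<psi> $ a))\<^sup>2) = (\<Sum>l<min n m. (d l)\<^sup>2)"
proof -
  have "(\<Sum>a<n * m. (cmod (\<psi> $ a))\<^sup>2) = (\<Sum>i<n. \<Sum>q<m. (cmod (rect_diag n m d $$ (i,q)))\<^sup>2)"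
    unfolding sum_cmod_sq_coeff_mat coeff by (rule sum_cmod_sq_unitary_mult[OF uU rect_diag_carrier])
  also have "\<dots> = (\<Sum>i<n. if i < m then (d i)\<^sup>2 else 0)"
    by (intro sum.cong refl) (simp add: rect_diag_def if_distrib if_distribR sum.delta cong: if_cong)
  also have "\<dots> = (\<Sum>l<min n m. (d l)\<^sup>2)"
  proof -
    have "{l \<in> {..<n}. l < m} = {..<min n m}" by auto
    then show ?thesis using sum.inter_filter[of "{..<n}" "\<lambda>l. (d l)\<^sup>2" "\<lambda>l. l < m"] by simp
  qed
  finally show ?thesis .
qed

section \<open>Quadratic forms and blockwise conjugation\<close>

lemma qform_sum_blocks:
  assumes "v \<in> carrier_vec (n * m)"
  shows "qform X v = (\<Sum>i<n. \<Sum>p<m. \<Sum>j<n. \<Sum>q<m. cnj (v $ (i * m + p)) * X $$ (i * m + p, j * m + q) * v $ (j * m + q))"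
  using assms by (simp add: qform_def sum_lessThan_mult_nat)

lemma qform_conj:
  assumes B: "B \<in> carrier_mat N N'" and X: "X \<in> carrier_mat N' N'" and v: "v \<in> carrier_vec N"
  shows "qform (B * X * cadj B) v = qform X (cadj B *\<^sub>v v)"
proof -
  have w: "(cadj B *\<^sub>v v) $ k = (\<Sum>i<N. cnj (B $$ (i,k)) * v $ i)" if "k < N'" for k
    using B v that by (auto simp: scalar_prod_def atLeast0LessThan intro!: sum.cong)
  have "qform X (cadj B *\<^sub>v v)
      = (\<Sum>k<N'. \<Sum>l<N'. (\<Sum>i<N. B $$ (i,k) * cnj (v $ i)) * X $$ (k,l) * (\<Sum>j<N. cnj (B $$ (j,l)) * v $ j))"
    using B by (simp add: qform_def w cnj_sum del: index_mult_mat_vec)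
  also have "\<dots> = (\<Sum>k<N'. \<Sum>l<N'. \<Sum>i<N. \<Sum>j<N. cnj (v $ i) * (B $$ (i,k) * X $$ (k,l) * cnj (B $$ (j,l))) * v $ j)"
    by (simp add: sum_distrib_left sum_distrib_right mult_ac)
  also have "\<dots> = (\<Sum>i<N. \<Sum>j<N. \<Sum>k<N'. \<Sum>l<N'. cnj (v $ i) * (B $$ (i,k) * X $$ (k,l) * cnj (B $$ (j,l))) * v $ j)"
    by (rule sum_swap_inner)
  also have "\<dots> = (\<Sum>i<N. \<Sum>j<N. cnj (v $ i) * (B * X * cadj B) $$ (i,j) * v $ j)"
    by (intro sum.cong refl) (simp add: index_mult_mat_cadj[OF B X] sum_distrib_left sum_distrib_right
        del: index_mult_mat)
  also have "\<dots> = qform (B * X * cadj B) v"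
    using v by (simp add: qform_def)
  finally show ?thesis ..
qed

definition id_kron :: "nat \<Rightarrow> nat \<Rightarrow> complex mat \<Rightarrow> complex mat" where
  "id_kron K m A = mat (K * m) (K * m) (\<lambda>(a,b). if a div m = b div m then A $$ (a mod m, b mod m) else 0)"

definition blockwise :: "nat \<Rightarrow> nat \<Rightarrow> (complex mat \<Rightarrow> complex mat) \<Rightarrow> complex mat \<Rightarrow> complex mat" where
  "blockwise K m \<Gamma> X = mat (K * m) (K * m) (\<lambda>(a,b). \<Gamma> (mblock m X (a div m) (b div m)) $$ (a mod m, b mod m))"

lemma id_kron_carrier [simp]: "id_kron K m A \<in> carrier_mat (K * m) (K * m)"
  by (simp add: id_kron_def)

lemma dim_id_kron [simp]: "dim_row (id_kron K m A) = K * m" "dim_col (id_kron K m A) = K * m"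
  by (simp_all add: id_kron_def)

lemma blockwise_carrier [simp]: "blockwise K m \<Gamma> X \<in> carrier_mat (K * m) (K * m)"
  by (simp add: blockwise_def)

lemma dim_blockwise [simp]: "dim_row (blockwise K m \<Gamma> X) = K * m" "dim_col (blockwise K m \<Gamma> X) = K * m"
  by (simp_all add: blockwise_def)

lemma choi_carrier [simp]: "choi n m \<Phi> \<in> carrier_mat (n * m) (n * m)"
  by (simp add: choi_def)

lemma mblock_carrier [simp]: "mblock m X i j \<in> carrier_mat m m"
  by (simp add: mblock_def)

lemma compl_pos_iff_blockwise:
  "compl_pos m \<Gamma> \<longleftrightarrow> lin_map m m \<Gamma> \<and> (\<forall>K X. psd (K * m) X \<longrightarrow> psd (K * m) (blockwise K m \<Gamma> X))"
  by (simp add: compl_pos_def blockwise_def)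

lemma choi_comp:
  assumes \<Phi>: "lin_map n m \<Phi>"
  shows "choi n m (\<Gamma> \<circ> \<Phi>) = blockwise n m \<Gamma> (choi n m \<Phi>)"
proof -
  have "mblock m (choi n m \<Phi>) i j = \<Phi> (munit n i j)" if "i < n" "j < n" for i j
  proof -
    have "\<Phi> (munit n i j) \<in> carrier_mat m m" using \<Phi> by (auto simp: lin_map_def munit_def)
    then show ?thesis using that by (intro eq_matI) (auto simp: mblock_def choi_def mult_add_less_mult)
  qed
  then show ?thesis
    by (intro eq_matI) (auto simp: choi_def blockwise_def less_mult_imp_div_less)
qed

lemma blockwise_Ad:
  assumes A: "A \<in> carrier_mat m m" and X: "X \<in> carrier_mat (K * m) (K * m)"
  shows "blockwise K m (Ad A) X = id_kron K m A * X * cadj (id_kron K m A)"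
proof (rule eq_matI)
  fix a b assume "a < dim_row (id_kron K m A * X * cadj (id_kron K m A))"
    "b < dim_col (id_kron K m A * X * cadj (id_kron K m A))"
  then have ab: "a < K * m" "b < K * m" by auto
  then obtain i p j q where ip: "i < K" "p < m" "a = i * m + p" and jq: "j < K" "q < m" "b = j * m + q"
    using less_mult_nat_cases by metis
  let ?I = "id_kron K m A"
  have "(?I * X * cadj ?I) $$ (a,b) = (\<Sum>c<K * m. \<Sum>d<K * m. ?I $$ (a,c) * X $$ (c,d) * cnj (?I $$ (b,d)))"
    by (rule index_mult_mat_cadj[OF id_kron_carrier X ab])
  also have "\<dots> = (\<Sum>i'<K. \<Sum>p'<m. \<Sum>j'<K. \<Sum>q'<m.
      ?I $$ (a, i' * m + p') * X $$ (i' * m + p', j' * m + q') * cnj (?I $$ (b, j' * m + q')))"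
    by (simp only: sum_lessThan_mult_nat)
  also have "\<dots> = (\<Sum>i'<K. \<Sum>p'<m. \<Sum>j'<K. \<Sum>q'<m.
      if i' = i \<and> j' = j then A $$ (p,p') * X $$ (i * m + p', j * m + q') * cnj (A $$ (q,q')) else 0)"
    using ip jq by (intro sum.cong refl) (auto simp: id_kron_def mult_add_less_mult)
  also have "\<dots> = (\<Sum>p'<m. \<Sum>j'<K. \<Sum>q'<m.
      if j' = j then A $$ (p,p') * X $$ (i * m + p', j * m + q') * cnj (A $$ (q,q')) else 0)"
    using ip by (subst sum_single_nonzero[of _ i]) auto
  also have "\<dots> = (\<Sum>p'<m. \<Sum>q'<m. A $$ (p,p') * X $$ (i * m + p', j * m + q') * cnj (A $$ (q,q')))"
    using jq by (intro sum.cong[OF refl]) (subst sum_single_nonzero[of _ j], auto)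
  also have "\<dots> = (A * mblock m X i j * cadj A) $$ (p,q)"
    unfolding index_mult_mat_cadj[OF A mblock_carrier ip(2) jq(2)] by (simp add: mblock_def)
  also have "\<dots> = blockwise K m (Ad A) X $$ (a,b)"
    using ab ip jq by (simp add: blockwise_def Ad_def)
  finally show "blockwise K m (Ad A) X $$ (a,b) = (?I * X * cadj ?I) $$ (a,b)" ..
qed auto

lemma cadj_id_kron_mult_vec:
  assumes A: "A \<in> carrier_mat m m" and v: "v \<in> carrier_vec (K * m)"
  shows "cadj (id_kron K m A) *\<^sub>v v = coeff_vec K m (coeff_mat K m v * map_mat cnj A)"
proof (rule eq_vecI)
  fix a assume "a < dim_vec (coeff_vec K m (coeff_mat K m v * map_mat cnj A))"
  then have a: "a < K * m" by simp
  then obtain i p where ip: "i < K" "p < m" "a = i * m + p" using less_mult_nat_cases by metis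
  let ?I = "id_kron K m A"
  have "(cadj ?I *\<^sub>v v) $ a = (\<Sum>c<K * m. cadj ?I $$ (a,c) * v $ c)"
    by (rule index_mult_mat_vec_sum[OF cadj_carrier_mat[OF id_kron_carrier] v a])
  also have "\<dots> = (\<Sum>i'<K. \<Sum>q<m. cadj ?I $$ (a, i' * m + q) * v $ (i' * m + q))"
    by (rule sum_lessThan_mult_nat)
  also have "\<dots> = (\<Sum>i'<K. \<Sum>q<m. if i' = i then cnj (A $$ (q,p)) * v $ (i * m + q) else 0)"
    using ip a by (intro sum.cong refl) (auto simp: id_kron_def mult_add_less_mult)
  also have "\<dots> = (\<Sum>q<m. cnj (A $$ (q,p)) * v $ (i * m + q))"
    using ip by (subst sum_single_nonzero[of _ i]) auto
  also have "\<dots> = (coeff_mat K m v * map_mat cnj A) $$ (i,p)"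
    unfolding index_mult_mat_sum[OF coeff_mat_carrier map_carrier_mat[THEN iffD2, OF A] ip(1,2)]
    using A ip by (intro sum.cong refl) (auto simp: coeff_mat_def mult.commute)
  finally show "(cadj ?I *\<^sub>v v) $ a = coeff_vec K m (coeff_mat K m v * map_mat cnj A) $ a"
    using ip by simp
qed simp

lemma qform_blockwise_Ad:
  assumes "A \<in> carrier_mat m m" "X \<in> carrier_mat (K * m) (K * m)" "v \<in> carrier_vec (K * m)"
  shows "qform (blockwise K m (Ad A) X) v = qform X (coeff_vec K m (coeff_mat K m v * map_mat cnj A))"
  using assms by (simp add: blockwise_Ad qform_conj[OF id_kron_carrier] cadj_id_kron_mult_vec)

lemma lin_map_Ad:
  assumes A: "A \<in> carrier_mat m m"
  shows "lin_map m m (Ad A)"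
  unfolding lin_map_def Ad_def using A
  by (auto simp: mult_add_distrib_mat add_mult_distrib_mat[of _ m m _ _ m] mult_smult_distrib
      mult_smult_assoc_mat[of _ m m _ m])

lemma compl_pos_Ad:
  assumes A: "A \<in> carrier_mat m m"
  shows "compl_pos m (Ad A)"
  unfolding compl_pos_iff_blockwise
proof (intro conjI allI impI)
  fix K X assume "psd (K * m) X"
  then show "psd (K * m) (blockwise K m (Ad A) X)"
    using A by (auto simp: psd_def qform_blockwise_Ad)
qed (rule lin_map_Ad[OF A])

lemma qform_choi_Ad:
  assumes "lin_map n m \<Phi>" "A \<in> carrier_mat m m" "\<psi> \<in> carrier_vec (n * m)"
  shows "qform (choi n m (Ad A \<circ> \<Phi>)) \<psi> = qform (choi n m \<Phi>) (coeff_vec n m (coeff_mat n m \<psi> * map_mat cnj A))"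
  using assms by (simp add: choi_comp qform_blockwise_Ad)

section \<open>Admissible vectors\<close>

lemma admissible_int_iff:
  "admissible n m (real k + 1) \<psi> \<longleftrightarrow> \<psi> \<in> carrier_vec (n * m) \<and> (\<Sum>a<n * m. (cmod (\<psi> $ a))\<^sup>2) = 1 \<and>
     (\<forall>j. k + 2 \<le> j \<and> j \<le> min n m \<longrightarrow> schmidt n m \<psi> j = 0)"
proof -
  have "nat \<lfloor>real k + 1\<rfloor> = k + 1" "nat \<lceil>real k + 1\<rceil> = k + 1"
    by (metis Suc_eq_plus1 add.commute floor_of_nat ceiling_of_nat nat_int of_nat_Suc)+
  then show ?thesis unfolding admissible_def Let_def by auto
qed

lemma admissible_frac_iff:
  assumes "0 < \<theta>" "\<theta> < 1"
  shows "admissible n m (real k + \<theta>) \<psi> \<longleftrightarrow> \<psi> \<in> carrier_vec (n * m) \<and> (\<Sum>a<n * m. (cmod (\<psi> $ a))\<^sup>2) = 1 \<and>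
     (\<forall>j. k + 2 \<le> j \<and> j \<le> min n m \<longrightarrow> schmidt n m \<psi> j = 0) \<and>
     schmidt n m \<psi> (k + 1) \<le> \<theta> / real k * (\<Sum>j=1..k. schmidt n m \<psi> j)"
proof -
  have "\<lfloor>real k + \<theta>\<rfloor> = int k" "\<lceil>real k + \<theta>\<rceil> = int k + 1"
    using assms by (simp_all add: floor_eq_iff ceiling_eq_iff)
  then show ?thesis unfolding admissible_def Let_def using assms by auto
qed

definition boundary_profile :: "nat \<Rightarrow> real \<Rightarrow> nat \<Rightarrow> real" where
  "boundary_profile k \<theta> l = (if l < k then 1 else if l = k then \<theta> else 0) / sqrt (real k + \<theta>\<^sup>2)"

lemma admissible_boundary_profile:
  assumes uU: "unitary n U" and k: "1 \<le> k" "k < min n m" and \<theta>: "0 < \<theta>" "\<theta> < 1"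
  shows "admissible n m (real k + \<theta>) (coeff_vec n m (U * rect_diag n m (boundary_profile k \<theta>)))"
    (is "admissible _ _ _ ?\<psi>")
proof -
  define s where "s = sqrt (real k + \<theta>\<^sup>2)"
  have pos: "real k + \<theta>\<^sup>2 > 0" using k by (simp add: add_pos_nonneg)
  then have s: "s > 0" by (simp add: s_def)
  have coeff: "coeff_mat n m ?\<psi> = U * rect_diag n m (boundary_profile k \<theta>)"
    using unitary_carrier_mat[OF uU] by simp
  have sch: "schmidt n m ?\<psi> j = boundary_profile k \<theta> (j - 1)" if "1 \<le> j" "j \<le> min n m" for j
    using \<theta> by (intro schmidt_unitary_mult_rect_diag[OF uU _ _ coeff that])
      (auto simp: boundary_profile_def divide_right_mono)
  have "(\<Sum>a<n * m. (cmod (?\<psi> $ a))\<^sup>2) = (\<Sum>l<min n m. (boundary_profile k \<theta> l)\<^sup>2)"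
    by (rule sum_cmod_sq_unitary_mult_rect_diag[OF uU coeff])
  also have "\<dots> = (\<Sum>l<Suc k. (boundary_profile k \<theta> l)\<^sup>2)"
    using k by (intro sum.mono_neutral_right) (auto simp: boundary_profile_def)
  also have "\<dots> = real k / (real k + \<theta>\<^sup>2) + \<theta>\<^sup>2 / (real k + \<theta>\<^sup>2)"
    using pos by (simp add: boundary_profile_def power_divide)
  also have "\<dots> = 1" using pos by (simp add: add_divide_distrib[symmetric])
  finally have norm: "(\<Sum>a<n * m. (cmod (?\<psi> $ a))\<^sup>2) = 1" .
  have "(\<Sum>j=1..k. schmidt n m ?\<psi> j) = (\<Sum>j=1..k. 1 / s)"
    using k sch by (intro sum.cong refl) (auto simp: boundary_profile_def s_def)
  then have "(\<Sum>j=1..k. schmidt n m ?\<psi> j) = real k / s" by simp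
  moreover have "schmidt n m ?\<psi> (k + 1) = \<theta> / s"
    using k sch[of "k + 1"] by (simp add: boundary_profile_def s_def)
  ultimately show ?thesis
    unfolding admissible_frac_iff[OF \<theta>] using norm sch k by (auto simp: boundary_profile_def)
qed

lemma sum_sq_le_card_mult_sum_sq:
  fixes x :: "nat \<Rightarrow> real"
  shows "(\<Sum>l<k. x l)\<^sup>2 \<le> real k * (\<Sum>l<k. (x l)\<^sup>2)"
proof -
  have "\<bar>\<Sum>l<k. x l\<bar> \<le> (\<Sum>l<k. \<bar>1\<bar> * \<bar>x l\<bar>)" by (simp add: sum_abs)
  also have "\<dots> \<le> sqrt (real k) * sqrt (\<Sum>l<k. (x l)\<^sup>2)"
    using L2_set_mult_ineq[of "\<lambda>_. 1" x "{..<k}"] by (simp add: L2_set_def)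
  finally have "\<bar>\<Sum>l<k. x l\<bar>\<^sup>2 \<le> (sqrt (real k) * sqrt (\<Sum>l<k. (x l)\<^sup>2))\<^sup>2"
    by (rule power_mono) simp
  then show ?thesis by (simp add: power_mult_distrib sum_nonneg)
qed

lemma boundary_quadratic_bound:
  fixes K \<theta> a b :: real
  assumes K: "1 \<le> K" and \<theta>: "0 < \<theta>" "\<theta> < 1" and ab: "0 \<le> a" "0 \<le> b"
    and norm: "a\<^sup>2 + K * b\<^sup>2 \<le> K" and adm: "K * b \<le> \<theta> * a"
  shows "(K + \<theta>\<^sup>2) * (a + b)\<^sup>2 \<le> (K + \<theta>)\<^sup>2"
proof -
  \<comment> \<open>a sum-of-squares certificate: both summands are nonnegative since \<open>K + 2\<theta> \<ge> 1\<close> and \<open>K b \<le> \<theta> a\<close>\<close>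
  have "K\<^sup>2 * ((K + \<theta>)\<^sup>2 * (a\<^sup>2 + K * b\<^sup>2) - K * (K + \<theta>\<^sup>2) * (a + b)\<^sup>2) =
      K\<^sup>2 * (K + 2 * \<theta> - 1) * (K * b - \<theta> * a)\<^sup>2 + 2 * K\<^sup>2 * a * (1 - \<theta>) * (K + \<theta>) * (\<theta> * a - K * b)"
    by (simp add: power2_eq_square algebra_simps)
  also have "\<dots> \<ge> 0"
    using K \<theta> ab adm by (intro add_nonneg_nonneg mult_nonneg_nonneg) auto
  finally have "K * (K + \<theta>\<^sup>2) * (a + b)\<^sup>2 \<le> (K + \<theta>)\<^sup>2 * (a\<^sup>2 + K * b\<^sup>2)"
    using K by (simp add: zero_le_mult_iff)
  also have "\<dots> \<le> (K + \<theta>)\<^sup>2 * K" using norm by (intro mult_left_mono) auto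
  finally show ?thesis using K by (simp add: mult.commute[of K] mult.assoc)
qed

lemma admissible_sum_schmidt_sq_le:
  assumes k: "1 \<le> k" "k < min n m" and \<theta>: "0 < \<theta>" "\<theta> < 1"
    and adm: "admissible n m (real k + \<theta>) \<psi>"
  shows "(real k + \<theta>\<^sup>2) * (\<Sum>l<n. schmidt n m \<psi> (Suc l))\<^sup>2 \<le> (real k + \<theta>)\<^sup>2"
proof -
  let ?s = "\<lambda>l. schmidt n m \<psi> (Suc l)"
  have norm: "(\<Sum>a<n * m. (cmod (\<psi> $ a))\<^sup>2) = 1"
    and tail: "\<And>j. k + 2 \<le> j \<and> j \<le> min n m \<Longrightarrow> schmidt n m \<psi> j = 0"
    and last: "?s k \<le> \<theta> / real k * (\<Sum>j=1..k. schmidt n m \<psi> j)"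
    using adm unfolding admissible_frac_iff[OF \<theta>] by auto
  have vanish: "?s l = 0" if "k < l" "l < n" for l
    using tail[of "Suc l"] that by (cases "Suc l \<le> min n m") (auto simp: schmidt_def)
  have split: "(\<Sum>l<n. f l) = (\<Sum>l<k. f l) + f k" if "\<And>l. k < l \<Longrightarrow> l < n \<Longrightarrow> f l = 0" for f :: "nat \<Rightarrow> real"
  proof -
    have "(\<Sum>l<n. f l) = (\<Sum>l<Suc k. f l)"
      using k that by (intro sum.mono_neutral_right) auto
    then show ?thesis by simp
  qed
  define a where "a = (\<Sum>l<k. ?s l)"
  define b where "b = ?s k"
  have "a\<^sup>2 \<le> real k * (\<Sum>l<k. (?s l)\<^sup>2)"
    unfolding a_def by (rule sum_sq_le_card_mult_sum_sq)
  moreover have "(\<Sum>l<n. (?s l)\<^sup>2) = (\<Sum>l<k. (?s l)\<^sup>2) + (?s k)\<^sup>2"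
    by (rule split) (simp add: vanish)
  then have "(\<Sum>l<k. (?s l)\<^sup>2) + b\<^sup>2 = 1"
    using norm by (simp add: sum_cmod_sq_eq_sum_schmidt_sq b_def)
  then have "real k * (\<Sum>l<k. (?s l)\<^sup>2) + real k * b\<^sup>2 = real k"
    by (metis distrib_left mult.right_neutral)
  ultimately have "a\<^sup>2 + real k * b\<^sup>2 \<le> real k" by linarith
  moreover have "real k * b \<le> \<theta> * a"
  proof -
    have "b \<le> \<theta> / real k * a" using last by (simp add: a_def b_def sum.atLeast1_atMost_eq)
    then show ?thesis using k by (simp add: field_simps)
  qed
  ultimately have "(real k + \<theta>\<^sup>2) * (a + b)\<^sup>2 \<le> (real k + \<theta>)\<^sup>2"
    using k \<theta> by (intro boundary_quadratic_bound) (auto simp: a_def b_def schmidt_nonneg sum_nonneg)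
  moreover have "(\<Sum>l<n. ?s l) = a + b"
    unfolding a_def b_def by (rule split) (simp add: vanish)
  ultimately show ?thesis by simp
qed

section \<open>The witness map\<close>

definition trace_minus_corner :: "nat \<Rightarrow> nat \<Rightarrow> real \<Rightarrow> complex mat \<Rightarrow> complex mat" where
  "trace_minus_corner m r c X = mat m m (\<lambda>(p,q).
     (if p = q then (\<Sum>i<dim_row X. X $$ (i,i)) else 0) - of_real c * (if p < r \<and> q < r then X $$ (p,q) else 0))"

lemma herm_pres_trace_minus_corner:
  assumes "r \<le> n"
  shows "herm_pres n m (trace_minus_corner m r c)"
  unfolding herm_pres_def lin_map_def
proof (intro conjI ballI allI impI)
  fix X Y :: "complex mat" and a :: complex assume X: "X \<in> carrier_mat n n" and Y: "Y \<in> carrier_mat n n"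
  show "trace_minus_corner m r c (X + Y) = trace_minus_corner m r c X + trace_minus_corner m r c Y"
    using X Y assms by (intro eq_matI) (auto simp: trace_minus_corner_def sum.distrib algebra_simps)
  show "trace_minus_corner m r c (a \<cdot>\<^sub>m X) = a \<cdot>\<^sub>m trace_minus_corner m r c X"
    using X assms by (intro eq_matI) (auto simp: trace_minus_corner_def sum_distrib_left algebra_simps)
next
  fix X :: "complex mat" assume X: "X \<in> carrier_mat n n" and h: "cadj X = X"
  have herm: "cnj (X $$ (q,p)) = X $$ (p,q)" if "p < n" "q < n" for p q
    using arg_cong[OF h, of "\<lambda>X. X $$ (p,q)"] X that by simp
  then show "cadj (trace_minus_corner m r c X) = trace_minus_corner m r c X"
    using X assms by (intro eq_matI) (auto simp: trace_minus_corner_def)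
qed (simp add: trace_minus_corner_def)

lemma trace_munit:
  assumes "i < n"
  shows "(\<Sum>l<dim_row (munit n i j). munit n i j $$ (l,l)) = (if i = j then 1 else 0)"
proof (cases "i = j")
  case True
  then show ?thesis using assms by (simp add: munit_def)
qed (auto simp: munit_def intro: sum.neutral)

lemma mult_indicator_diff:
  fixes x y c :: "'a::comm_ring_1"
  shows "x * ((if P then 1 else 0) - c * ((if Q then 1 else 0) * (if R then 1 else 0))) * y
    = (if P then x * y else 0) - c * ((if Q then x else 0) * (if R then y else 0))"
  by (simp add: algebra_simps)

lemma index_choi_trace_minus_corner:
  assumes r: "r \<le> n" "r \<le> m" and ijpq: "i < n" "p < m" "j < n" "q < m"
  shows "choi n m (trace_minus_corner m r c) $$ (i * m + p, j * m + q) = (if j = i \<and> q = p then 1 else 0)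
      - of_real c * ((if i = p \<and> p < r then 1 else 0) * (if j = q \<and> q < r then 1 else 0))"
  using ijpq r trace_munit[of i n j]
  by (auto simp: choi_def trace_minus_corner_def mult_add_less_mult munit_def)

lemma qform_choi_trace_minus_corner:
  assumes r: "r \<le> n" "r \<le> m" and v: "v \<in> carrier_vec (n * m)"
  shows "qform (choi n m (trace_minus_corner m r c)) v
    = of_real ((\<Sum>a<n * m. (cmod (v $ a))\<^sup>2) - c * (cmod (\<Sum>i<r. v $ (i * m + i)))\<^sup>2)"
proof -
  let ?C = "choi n m (trace_minus_corner m r c)"
  let ?T = "\<Sum>i<r. v $ (i * m + i)"
  have "qform ?C v = (\<Sum>i<n. \<Sum>p<m. \<Sum>j<n. \<Sum>q<m.
      (if j = i \<and> q = p then cnj (v $ (i * m + p)) * v $ (j * m + q) else 0)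
      - of_real c * ((if i = p \<and> p < r then cnj (v $ (i * m + p)) else 0) * (if j = q \<and> q < r then v $ (j * m + q) else 0)))"
    unfolding qform_sum_blocks[OF v]
    by (intro sum.cong refl) (simp add: index_choi_trace_minus_corner[OF r] mult_indicator_diff)
  also have "\<dots> = (\<Sum>i<n. \<Sum>p<m. \<Sum>j<n. \<Sum>q<m. if j = i \<and> q = p then cnj (v $ (i * m + p)) * v $ (j * m + q) else 0)
      - of_real c * (\<Sum>i<n. \<Sum>p<m. \<Sum>j<n. \<Sum>q<m.
          (if i = p \<and> p < r then cnj (v $ (i * m + p)) else 0) * (if j = q \<and> q < r then v $ (j * m + q) else 0))"
    by (simp only: sum_subtractf sum_distrib_left)
  also have "\<dots> = (\<Sum>i<n. \<Sum>p<m. cnj (v $ (i * m + p)) * v $ (i * m + p)) - of_real c * (cnj ?T * ?T)"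
  proof -
    have diag: "(\<Sum>i<n. \<Sum>p<m. \<Sum>j<n. \<Sum>q<m. if j = i \<and> q = p then cnj (v $ (i * m + p)) * v $ (j * m + q) else 0)
        = (\<Sum>i<n. \<Sum>p<m. cnj (v $ (i * m + p)) * v $ (i * m + p))"
      by (intro sum.cong refl) (simp add: sum_sum_delta)
    have F: "(\<Sum>i<n. \<Sum>p<m. if i = p \<and> p < r then cnj (v $ (i * m + p)) else 0) = cnj ?T"
      using sum_diag_indicator[OF r, of "\<lambda>i p. cnj (v $ (i * m + p))"] by (simp add: cnj_sum)
    have G: "(\<Sum>j<n. \<Sum>q<m. if j = q \<and> q < r then v $ (j * m + q) else 0) = ?T"
      using sum_diag_indicator[OF r, of "\<lambda>j q. v $ (j * m + q)"] by simp
    have "(\<Sum>i<n. \<Sum>p<m. \<Sum>j<n. \<Sum>q<m.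
          (if i = p \<and> p < r then cnj (v $ (i * m + p)) else 0) * (if j = q \<and> q < r then v $ (j * m + q) else 0))
        = (\<Sum>i<n. \<Sum>p<m. if i = p \<and> p < r then cnj (v $ (i * m + p)) else 0)
          * (\<Sum>j<n. \<Sum>q<m. if j = q \<and> q < r then v $ (j * m + q) else 0)"
      by (rule sum_sum_mult_sum_sum[symmetric])
    also have "\<dots> = cnj ?T * ?T" by (simp only: F G)
    finally show ?thesis by (simp only: diag)
  qed
  also have "\<dots> = of_real ((\<Sum>a<n * m. (cmod (v $ a))\<^sup>2) - c * (cmod ?T)\<^sup>2)"
  proof -
    have "(\<Sum>i<n. \<Sum>p<m. cnj (v $ (i * m + p)) * v $ (i * m + p)) = of_real (\<Sum>a<n * m. (cmod (v $ a))\<^sup>2)"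
      by (simp add: sum_lessThan_mult_nat mult_cnj_eq_cmod_sq)
    then show ?thesis unfolding mult_cnj_eq_cmod_sq(2) by simp
  qed
  finally show ?thesis .
qed

lemma beta_pos_trace_minus_corner:
  assumes k: "1 \<le> k" "k < min n m" and \<theta>: "0 < \<theta>" "\<theta> < 1"
  shows "beta_pos n m (real k + \<theta>) (trace_minus_corner m (Suc k) ((real k + \<theta>\<^sup>2) / (real k + \<theta>)\<^sup>2))"
  unfolding beta_pos_def
proof (intro conjI allI impI)
  show "herm_pres n m (trace_minus_corner m (Suc k) ((real k + \<theta>\<^sup>2) / (real k + \<theta>)\<^sup>2))"
    using k by (intro herm_pres_trace_minus_corner) simp
  fix \<psi> assume adm: "admissible n m (real k + \<theta>) \<psi>"
  then have \<psi>: "\<psi> \<in> carrier_vec (n * m)" and norm: "(\<Sum>a<n * m. (cmod (\<psi> $ a))\<^sup>2) = 1"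
    unfolding admissible_frac_iff[OF \<theta>] by auto
  let ?T = "cmod (\<Sum>i<Suc k. \<psi> $ (i * m + i))"
  have "?T\<^sup>2 \<le> (\<Sum>l<n. schmidt n m \<psi> (Suc l))\<^sup>2"
    using k by (intro power_mono cmod_diag_sum_le_sum_schmidt) auto
  then have "(real k + \<theta>\<^sup>2) * ?T\<^sup>2 \<le> (real k + \<theta>)\<^sup>2"
    using admissible_sum_schmidt_sq_le[OF k \<theta> adm] k
    by (meson add_nonneg_nonneg of_nat_0_le_iff order_trans mult_left_mono zero_le_power2)
  then have "(real k + \<theta>\<^sup>2) / (real k + \<theta>)\<^sup>2 * ?T\<^sup>2 \<le> 1"
    using \<theta> by (simp add: field_simps)
  moreover have "qform (choi n m (trace_minus_corner m (Suc k) ((real k + \<theta>\<^sup>2) / (real k + \<theta>)\<^sup>2))) \<psi>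
      = of_real (1 - (real k + \<theta>\<^sup>2) / (real k + \<theta>)\<^sup>2 * ?T\<^sup>2)"
    using k \<psi> by (simp add: qform_choi_trace_minus_corner norm del: of_real_diff)
  ultimately show "qform (choi n m (trace_minus_corner m (Suc k) ((real k + \<theta>\<^sup>2) / (real k + \<theta>)\<^sup>2))) \<psi> \<ge> 0"
    by (simp add: less_eq_complex_def)
qed

lemma trace_minus_corner_constant_gt:
  fixes k :: nat and \<theta> :: real
  assumes "1 \<le> k" "0 < \<theta>" "\<theta> < 1"
  shows "(real k + \<theta>\<^sup>2) / (real k + \<theta>)\<^sup>2 * (real k + 1) > 1"
proof -
  have "(real k + \<theta>\<^sup>2) * (real k + 1) - (real k + \<theta>)\<^sup>2 = real k * (1 - \<theta>)\<^sup>2"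
    by (simp add: power2_eq_square algebra_simps)
  moreover have "real k * (1 - \<theta>)\<^sup>2 > 0" using assms by simp
  ultimately show ?thesis using assms by (simp add: field_simps)
qed

lemma not_beta_pos_trace_minus_corner:
  assumes k: "k < min n m" and c: "c * (real k + 1) > 1"
  shows "\<not> beta_pos n m (real k + 1) (trace_minus_corner m (Suc k) c)"
proof
  assume pos: "beta_pos n m (real k + 1) (trace_minus_corner m (Suc k) c)"
  define d where "d l = (if l < Suc k then 1 / sqrt (real (Suc k)) else 0)" for l
  define \<psi> where "\<psi> = coeff_vec n m (rect_diag n m d)"
  have coeff: "coeff_mat n m \<psi> = 1\<^sub>m n * rect_diag n m d"
    by (simp add: \<psi>_def left_mult_one_mat[OF rect_diag_carrier])
  have sch: "schmidt n m \<psi> j = d (j - 1)" if "1 \<le> j" "j \<le> min n m" for j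
    by (rule schmidt_unitary_mult_rect_diag[OF unitary_one _ _ coeff that]) (auto simp: d_def)
  have "(\<Sum>a<n * m. (cmod (\<psi> $ a))\<^sup>2) = (\<Sum>l<min n m. (d l)\<^sup>2)"
    by (rule sum_cmod_sq_unitary_mult_rect_diag[OF unitary_one coeff])
  also have "\<dots> = (\<Sum>l<Suc k. (d l)\<^sup>2)"
    using k by (intro sum.mono_neutral_right) (auto simp: d_def)
  also have "\<dots> = 1" by (simp add: d_def power_divide)
  finally have norm: "(\<Sum>a<n * m. (cmod (\<psi> $ a))\<^sup>2) = 1" .
  have adm: "admissible n m (real k + 1) \<psi>"
    unfolding admissible_int_iff using norm sch by (auto simp: \<psi>_def d_def)
  have "(\<Sum>i<Suc k. \<psi> $ (i * m + i)) = (\<Sum>i<Suc k. of_real (1 / sqrt (real (Suc k))))"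
    using k by (intro sum.cong refl) (auto simp: \<psi>_def rect_diag_def d_def)
  then have T: "(\<Sum>i<Suc k. \<psi> $ (i * m + i)) = of_real (real (Suc k) * (1 / sqrt (real (Suc k))))"
    by (simp only: sum_constant card_lessThan of_real_mult of_real_of_nat_eq)
  have "real (Suc k) * (1 / sqrt (real (Suc k))) = sqrt (real (Suc k))"
    using real_div_sqrt[of "real (Suc k)"] by simp
  then have "(cmod (\<Sum>i<Suc k. \<psi> $ (i * m + i)))\<^sup>2 = real k + 1"
    unfolding T by simp
  then have "qform (choi n m (trace_minus_corner m (Suc k) c)) \<psi> = of_real (1 - c * (real k + 1))"
    using k norm by (simp add: qform_choi_trace_minus_corner \<psi>_def del: of_real_diff)
  then show False using pos adm c by (auto simp: beta_pos_def less_eq_complex_def)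
qed

section \<open>Conjugation destroys \<open>\<alpha>\<close>-positivity\<close>

lemma schmidt_tail_zero_rows:
  assumes tail: "\<And>j. k + 2 \<le> j \<Longrightarrow> j \<le> min n m \<Longrightarrow> schmidt n m \<psi> j = 0"
  shows "\<exists>U. unitary n U \<and> (\<forall>l q. k < l \<longrightarrow> l < n \<longrightarrow> q < m \<longrightarrow> (cadj U * coeff_mat n m \<psi>) $$ (l,q) = 0)"
proof -
  obtain U where uU: "unitary n U"
    and rows: "\<forall>l<n. (\<Sum>q<m. (cmod ((cadj U * coeff_mat n m \<psi>) $$ (l,q)))\<^sup>2) = (schmidt n m \<psi> (Suc l))\<^sup>2"
    using schmidt_decomposition by blast
  have "(cadj U * coeff_mat n m \<psi>) $$ (l,q) = 0" if "k < l" "l < n" "q < m" for l q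
  proof -
    have "schmidt n m \<psi> (Suc l) = 0"
      using tail[of "Suc l"] that by (cases "Suc l \<le> min n m") (auto simp: schmidt_def)
    then have "(\<Sum>q<m. (cmod ((cadj U * coeff_mat n m \<psi>) $$ (l,q)))\<^sup>2) = 0" using rows that by simp
    then show ?thesis using that by (simp add: sum_nonneg_eq_0_iff)
  qed
  then show ?thesis using uU by blast
qed

lemma rect_diag_left_factor:
  assumes N: "N \<in> carrier_mat n m" and km: "k < m"
    and zero: "\<And>l q. k < l \<Longrightarrow> l < n \<Longrightarrow> q < m \<Longrightarrow> N $$ (l,q) = 0"
    and d_pos: "\<And>l. l \<le> k \<Longrightarrow> d l > 0"
  shows "\<exists>B \<in> carrier_mat m m. rect_diag n m d * B = N"
proof
  define B where "B = mat m m (\<lambda>(p,q). if p \<le> k then N $$ (p,q) / of_real (d p) else 0)"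
  show B: "B \<in> carrier_mat m m" by (simp add: B_def)
  show "rect_diag n m d * B = N"
  proof (rule eq_matI)
    fix l q assume "l < dim_row N" "q < dim_col N"
    then have lq: "l < n" "q < m" using N by auto
    have "(rect_diag n m d * B) $$ (l,q) = (\<Sum>p<m. rect_diag n m d $$ (l,p) * B $$ (p,q))"
      by (rule index_mult_mat_sum[OF rect_diag_carrier B lq])
    also have "\<dots> = N $$ (l,q)"
    proof (cases "l \<le> k")
      case True
      then show ?thesis using lq km d_pos[OF True]
        by (subst sum_single_nonzero[of _ l]) (auto simp: rect_diag_def B_def)
    next
      case False
      then show ?thesis using lq zero[of l q] by (auto simp: rect_diag_def B_def intro!: sum.neutral)
    qed
    finally show "(rect_diag n m d * B) $$ (l,q) = N $$ (l,q)" .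
  qed (use N B in auto)
qed

lemma not_beta_pos_Ad_comp:
  assumes k: "1 \<le> k" "k < min n m" and \<theta>: "0 < \<theta>" "\<theta> < 1"
    and \<Phi>: "beta_pos n m (real k + \<theta>) \<Phi>" and not_\<Phi>: "\<not> beta_pos n m (real k + 1) \<Phi>"
  shows "\<exists>A \<in> carrier_mat m m. \<not> beta_pos n m (real k + \<theta>) (Ad A \<circ> \<Phi>)"
proof -
  have lin: "lin_map n m \<Phi>" using \<Phi> by (simp add: beta_pos_def herm_pres_def)
  obtain \<psi> where adm: "admissible n m (real k + 1) \<psi>" and neg: "\<not> qform (choi n m \<Phi>) \<psi> \<ge> 0"
    using \<Phi> not_\<Phi> unfolding beta_pos_def by auto
  then have \<psi>: "\<psi> \<in> carrier_vec (n * m)" unfolding admissible_int_iff by blast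
  obtain U where uU: "unitary n U"
    and zero: "\<forall>l q. k < l \<longrightarrow> l < n \<longrightarrow> q < m \<longrightarrow> (cadj U * coeff_mat n m \<psi>) $$ (l,q) = 0"
    using schmidt_tail_zero_rows[of k n m \<psi>] adm unfolding admissible_int_iff by blast
  have U: "U \<in> carrier_mat n n" using uU by (rule unitary_carrier_mat)
  define d where "d = boundary_profile k \<theta>"
  have N: "cadj U * coeff_mat n m \<psi> \<in> carrier_mat n m"
    by (rule mult_carrier_mat[OF cadj_carrier_mat[OF U] coeff_mat_carrier])
  have "\<exists>B \<in> carrier_mat m m. rect_diag n m d * B = cadj U * coeff_mat n m \<psi>"
    using k \<theta> zero by (intro rect_diag_left_factor[OF N]) (auto simp: d_def boundary_profile_def add_pos_nonneg)
  then obtain B where B: "B \<in> carrier_mat m m" and DB: "rect_diag n m d * B = cadj U * coeff_mat n m \<psi>"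
    by blast
  define \<psi>' where "\<psi>' = coeff_vec n m (U * rect_diag n m d)"
  define A where "A = map_mat cnj B"
  have A: "A \<in> carrier_mat m m" using B by (simp add: A_def)
  have "map_mat cnj A = B" unfolding A_def by (rule eq_matI) auto
  then have "coeff_mat n m \<psi>' * map_mat cnj A = U * (rect_diag n m d * B)"
    using U B by (simp add: \<psi>'_def assoc_mult_mat[OF U rect_diag_carrier B])
  also have "\<dots> = coeff_mat n m \<psi>"
    unfolding DB by (rule unitary_cadj_mult_cancel(2)[OF uU coeff_mat_carrier])
  finally have "qform (choi n m (Ad A \<circ> \<Phi>)) \<psi>' = qform (choi n m \<Phi>) \<psi>"
    using qform_choi_Ad[OF lin A, of \<psi>'] \<psi> by (simp add: \<psi>'_def)
  moreover have "admissible n m (real k + \<theta>) \<psi>'"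
    unfolding \<psi>'_def d_def by (rule admissible_boundary_profile[OF uU k \<theta>])
  ultimately have "\<not> beta_pos n m (real k + \<theta>) (Ad A \<circ> \<Phi>)"
    using neg by (auto simp: beta_pos_def)
  then show ?thesis using A by blast
qed

theorem proposition3p12:
  fixes n m k :: nat and \<theta> :: real
  assumes "1 \<le> k" and "k \<le> min n m - 1" and "0 < \<theta>" and "\<theta> < 1"
  shows "(\<exists>\<Phi> \<Gamma>. beta_pos n m (real k + \<theta>) \<Phi> \<and> compl_pos m \<Gamma> \<and>
                 \<not> beta_pos n m (real k + \<theta>) (\<Gamma> \<circ> \<Phi>)) \<and>
         (\<forall>\<Phi>. beta_pos n m (real k + \<theta>) \<Phi> \<and> \<not> beta_pos n m (real k + 1) \<Phi> \<longrightarrow>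
               (\<exists>A \<in> carrier_mat m m. \<not> beta_pos n m (real k + \<theta>) (Ad A \<circ> \<Phi>)))"
proof
  have k: "1 \<le> k" "k < min n m" and \<theta>: "0 < \<theta>" "\<theta> < 1" using assms by auto
  show conj: "\<forall>\<Phi>. beta_pos n m (real k + \<theta>) \<Phi> \<and> \<not> beta_pos n m (real k + 1) \<Phi> \<longrightarrow>
               (\<exists>A \<in> carrier_mat m m. \<not> beta_pos n m (real k + \<theta>) (Ad A \<circ> \<Phi>))"
    using not_beta_pos_Ad_comp[OF k \<theta>] by blast
  define \<Phi> where "\<Phi> = trace_minus_corner m (Suc k) ((real k + \<theta>\<^sup>2) / (real k + \<theta>)\<^sup>2)"
  have "beta_pos n m (real k + \<theta>) \<Phi>"
    unfolding \<Phi>_def by (rule beta_pos_trace_minus_corner[OF k \<theta>])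
  moreover have "\<not> beta_pos n m (real k + 1) \<Phi>"
    unfolding \<Phi>_def using k(2) trace_minus_corner_constant_gt[OF k(1) \<theta>] by (rule not_beta_pos_trace_minus_corner)
  ultimately obtain A where "A \<in> carrier_mat m m" "\<not> beta_pos n m (real k + \<theta>) (Ad A \<circ> \<Phi>)"
    using conj by blast
  then show "\<exists>\<Phi> \<Gamma>. beta_pos n m (real k + \<theta>) \<Phi> \<and> compl_pos m \<Gamma> \<and> \<not> beta_pos n m (real k + \<theta>) (\<Gamma> \<circ> \<Phi>)"
    using \<open>beta_pos n m (real k + \<theta>) \<Phi>\<close> compl_pos_Ad by blast
qed

end
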